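(* Let $q$ be a prime power and use the setting of the context. Let $\mathcal Q\in\mathcal H$ be a hyperbolic quadric not containing the point $T$, and let $\mathcal R$ be one of its two reguli. Then no two distinct lines of $\mathcal R$ lie in the same $C$-orbit.
   Context: Points of ${\rm PG}(3,q)$ are $\langle(x_1,x_2,x_3,x_4)\rangle$; $\pi$ is the plane $x_4=0$ and $T=\langle(0,0,0,1)\rangle$. Let $\sigma\in{\rm GL}(3,q)$ be a Singer cycle (element of order $q^3-1$) and let $C$ be the group of projectivities induced by the matrices $\begin{pmatrix} A&0\\0&1\end{pmatrix}$, $A\in\langle\sigma\rangle$ (order $q^3-1$). The group $C$ induces on $\pi$ a Singer cyclic group $C_1$ of order $q^2+q+1$. Embedding $\pi$ in ${\rm PG}(2,q^3)$, $C_1$ fixes a unique triangle $\Delta$ with vertices outside ${\rm PG}(2,q)$; the circumscribed bundle $\mathcal B$ is the set of non-degenerate conics of $\pi$ whose extensions over ${\rm GF}(q^3)$ contain the vertices of $\Delta$. $\mathcal H$ is the set of hyperbolic quadrics of ${\rm PG}(3,q)$ meeting $\pi$ in a conic of $\mathcal B$. A regulus of a hyperbolic quadric is one of its two families of $q+1$ pairwise skew lines. *)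

theory Defs
  imports Main
begin

text \<open>Coordinates are indexed from 0: the paper's coordinates x1,x2,x3,x4 are
 indices 0,1,2,3.  A vector of length n is a function nat => 'a vanishing
 outside {..<n}; a matrix is a function nat => nat => 'a (only entries with
 indices < n are used).\<close>

type_synonym 'a vect = "nat \<Rightarrow> 'a"
type_synonym 'a matr = "nat \<Rightarrow> nat \<Rightarrow> 'a"

definition vecs :: "nat \<Rightarrow> ('a::zero) vect set" where
  "vecs n = {v. \<forall>i\<ge>n. v i = 0}"

definition zvec :: "('a::zero) vect" where
  "zvec = (\<lambda>_. 0)"

definition mat_mul_vec :: "nat \<Rightarrow> ('a::semiring_0) matr \<Rightarrow> 'a vect \<Rightarrow> 'a vect" where
  "mat_mul_vec n M v = (\<lambda>i. if i < n then (\<Sum>j<n. M i j * v j) else 0)"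

definition mat_mul :: "nat \<Rightarrow> ('a::semiring_0) matr \<Rightarrow> 'a matr \<Rightarrow> 'a matr" where
  "mat_mul n M N = (\<lambda>i j. if i < n \<and> j < n then (\<Sum>k<n. M i k * N k j) else 0)"

definition mat_id :: "nat \<Rightarrow> ('a::{zero,one}) matr" where
  "mat_id n = (\<lambda>i j. if i < n \<and> j = i then 1 else 0)"

definition mat_pow :: "nat \<Rightarrow> ('a::semiring_1) matr \<Rightarrow> nat \<Rightarrow> 'a matr" where
  "mat_pow n M k = ((mat_mul n M) ^^ k) (mat_id n)"

definition invertible_mat :: "nat \<Rightarrow> ('a::semiring_1) matr \<Rightarrow> bool" where
  "invertible_mat n M \<longleftrightarrow> (\<exists>N. mat_mul n M N = mat_id n \<and> mat_mul n N M = mat_id n)"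

definition singer_cycle :: "('a::{finite,field}) matr \<Rightarrow> bool" where
  "singer_cycle A \<longleftrightarrow> invertible_mat 3 A \<and>
     mat_pow 3 A (card (UNIV :: 'a set)^3 - 1) = mat_id 3 \<and>
     (\<forall>k. 0 < k \<and> k < card (UNIV :: 'a set)^3 - 1 \<longrightarrow> mat_pow 3 A k \<noteq> mat_id 3)"

definition blk :: "('a::{zero,one}) matr \<Rightarrow> 'a matr" where
  "blk A = (\<lambda>i j. if i < 3 \<and> j < 3 then A i j else if i = 3 \<and> j = 3 then 1 else 0)"

text \<open>Lines of PG(3,q): 2-dimensional subspaces of GF(q)^4.\<close>
definition span2 :: "('a::semiring_0) vect \<Rightarrow> 'a vect \<Rightarrow> 'a vect set" where
  "span2 u v = {(\<lambda>i. a * u i + b * v i) | a b. True}"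

definition lines4 :: "('a::field) vect set set" where
  "lines4 = {span2 u v | u v. u \<in> vecs 4 \<and> v \<in> vecs 4 \<and>
      (\<forall>a b. (\<lambda>i. a * u i + b * v i) = zvec \<longrightarrow> a = 0 \<and> b = 0)}"

definition same_C_orbit :: "('a::field) matr \<Rightarrow> 'a vect set \<Rightarrow> 'a vect set \<Rightarrow> bool" where
  "same_C_orbit A L1 L2 \<longleftrightarrow> (\<exists>k. L2 = mat_mul_vec 4 (blk (mat_pow 3 A k)) ` L1)"

definition qf :: "nat \<Rightarrow> ('a::comm_semiring_0) matr \<Rightarrow> 'a vect \<Rightarrow> 'a" where
  "qf n c v = (\<Sum>i<n. \<Sum>j\<in>{i..<n}. c i j * v i * v j)"

definition polar :: "nat \<Rightarrow> ('a::comm_ring) matr \<Rightarrow> 'a vect \<Rightarrow> 'a vect \<Rightarrow> 'a" where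
  "polar n c v w = qf n c (\<lambda>i. v i + w i) - qf n c v - qf n c w"

definition nondeg :: "nat \<Rightarrow> ('a::comm_ring) matr \<Rightarrow> bool" where
  "nondeg n c \<longleftrightarrow> (\<forall>v\<in>vecs n. v \<noteq> zvec \<longrightarrow> qf n c v = 0 \<longrightarrow>
      (\<exists>w\<in>vecs n. polar n c v w \<noteq> 0))"

definition hyperbolic :: "('a::field) matr \<Rightarrow> bool" where
  "hyperbolic c \<longleftrightarrow> (\<exists>M. invertible_mat 4 M \<and>
      (\<forall>x\<in>vecs 4. qf 4 c (mat_mul_vec 4 M x) = x 0 * x 1 + x 2 * x 3))"

text \<open>GF(q^3) as an extension of GF(q) via an embedding phi.\<close>
definition cubic_ext :: "('a::{finite,field} \<Rightarrow> 'b::{finite,field}) \<Rightarrow> bool" where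
  "cubic_ext \<phi> \<longleftrightarrow> inj \<phi> \<and> \<phi> 0 = 0 \<and> \<phi> 1 = 1 \<and>
     (\<forall>x y. \<phi> (x + y) = \<phi> x + \<phi> y) \<and> (\<forall>x y. \<phi> (x * y) = \<phi> x * \<phi> y) \<and>
     card (UNIV :: 'b set) = card (UNIV :: 'a set)^3"

text \<open>Vertices of the triangle Delta: points of PG(2,q^3) outside PG(2,q)
  fixed by the Singer group C_1 (i.e. fixed by its generator).\<close>
definition delta_vertices :: "('a::field \<Rightarrow> 'b::field) \<Rightarrow> 'a matr \<Rightarrow> 'b vect set" where
  "delta_vertices \<phi> A = {w \<in> vecs 3. w \<noteq> zvec \<and>
      (\<exists>l. mat_mul_vec 3 (\<lambda>i j. \<phi> (A i j)) w = (\<lambda>i. l * w i)) \<and>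
      \<not> (\<exists>v\<in>vecs 3. \<exists>t. w = (\<lambda>i. t * \<phi> (v i)))}"

definition in_bundle :: "('a::field \<Rightarrow> 'b::field) \<Rightarrow> 'a matr \<Rightarrow> 'a matr \<Rightarrow> bool" where
  "in_bundle \<phi> A c3 \<longleftrightarrow> nondeg 3 c3 \<and>
     (\<forall>w\<in>delta_vertices \<phi> A. qf 3 (\<lambda>i j. \<phi> (c3 i j)) w = 0)"

text \<open>The set H: hyperbolic quadrics meeting pi (x4 = 0) in a conic of B.
  The section with pi is the restriction of the form to the first 3 coordinates.\<close>
definition in_H :: "('a::field \<Rightarrow> 'b::field) \<Rightarrow> 'a matr \<Rightarrow> 'a matr \<Rightarrow> bool" where
  "in_H \<phi> A c \<longleftrightarrow> hyperbolic c \<and> in_bundle \<phi> A c"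

definition pointT :: "('a::{zero,one}) vect" where
  "pointT = (\<lambda>i. if i = 3 then 1 else 0)"

definition line_on :: "('a::field) matr \<Rightarrow> 'a vect set \<Rightarrow> bool" where
  "line_on c L \<longleftrightarrow> L \<in> lines4 \<and> (\<forall>v\<in>L. qf 4 c v = 0)" 

definition regulus :: "('a::field) matr \<Rightarrow> 'a vect set set \<Rightarrow> bool" where
  "regulus c R \<longleftrightarrow> (\<exists>L0. line_on c L0 \<and>
      R = {L. line_on c L \<and> (L = L0 \<or> L \<inter> L0 = {zvec})})"

end

(*
  Let L be a line of the regulus and g = diag(A^k, 1) an element of C with g(L) also in the
  regulus. Since the section of the quadric by the plane x4 = 0 is a non-degenerate conic, which
  contains no line, L contains a point (p, 0) and a point (u, 1). If A^k is scalar, g fixes (p, 0).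
  Otherwise A^k - d is a nonzero element of the field GF(q)[A], hence has no eigenvector, so p and
  A^k p are independent. Over GF(q^3) the matrix A is diagonal in the basis formed by the vertices
  of the triangle fixed by the Singer group, and the conic passes through these vertices; in these
  coordinates the conditions that L and g(L) lie on the quadric become polynomial identities which,
  because T is not on the quadric, force A^k u = d0 p + d1 A^k p + u. Then d0 (p, 0) + (u, 1) lies
  on both L and g(L). But two distinct lines of a regulus are skew: if they met, the plane they
  span would meet the line defining the regulus in a point of the quadric that lies on neither.
*)
theory Submission
  imports Defs "HOL-Computational_Algebra.Polynomial" "HOL-Library.Cardinality"
begin

section \<open>Quadratic forms and determinants\<close>

lemma vecs_lincomb:
  "x \<in> vecs n \<Longrightarrow> y \<in> vecs n \<Longrightarrow> (\<lambda>i. a * x i + b * y i :: 'a::semiring_0) \<in> vecs n"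
  by (simp add: vecs_def)

lemma vecs_scale: "x \<in> vecs n \<Longrightarrow> (\<lambda>i. a * x i :: 'a::semiring_0) \<in> vecs n"
  by (simp add: vecs_def)

lemma zvec_vecs: "zvec \<in> vecs n"
  unfolding vecs_def zvec_def by simp

lemma polar_eq_sum:
  "polar n c x y = (\<Sum>i<n. \<Sum>j\<in>{i..<n}. c i j * (x i * y j + y i * x j))"
  unfolding polar_def qf_def by (simp only: sum_subtractf[symmetric]) (simp add: algebra_simps)

context
  fixes c :: "('a::comm_ring_1) matr"
begin

lemma polar_commute: "polar n c x y = polar n c y x"
  unfolding polar_eq_sum by (simp add: algebra_simps)

lemma polar_self: "polar n c x x = 2 * qf n c x"
  unfolding polar_eq_sum qf_def by (simp add: sum_distrib_left algebra_simps)

lemma qf_lincomb: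
  "qf n c (\<lambda>i. a * x i + b * y i) = a^2 * qf n c x + a * b * polar n c x y + b^2 * qf n c y"
  unfolding polar_eq_sum qf_def
  by (simp add: sum_distrib_left sum.distrib[symmetric] algebra_simps power2_eq_square)

lemma polar_lincomb3_right:
  "polar n c x (\<lambda>i. a * y i + b * z i + d * w i)
     = a * polar n c x y + b * polar n c x z + d * polar n c x w"
  unfolding polar_eq_sum by (simp add: sum_distrib_left sum.distrib[symmetric] algebra_simps)

lemma polar_lincomb_right:
  "polar n c x (\<lambda>i. a * y i + b * z i) = a * polar n c x y + b * polar n c x z"
  using polar_lincomb3_right[of n x a y b z 0 z] by simp

lemma polar_lincomb_left:
  "polar n c (\<lambda>i. a * y i + b * z i) x = a * polar n c y x + b * polar n c z x"
  using polar_lincomb_right by (simp add: polar_commute)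

lemma qf_lincomb3:
  "qf n c (\<lambda>i. a * x i + b * y i + d * z i) = a^2 * qf n c x + b^2 * qf n c y + d^2 * qf n c z
     + a * b * polar n c x y + a * d * polar n c x z + b * d * polar n c y z"
proof -
  have "(\<lambda>i. a * x i + b * y i + d * z i) = (\<lambda>i. 1 * (\<lambda>i. a * x i + b * y i) i + d * z i)"
    by simp
  then show ?thesis
    by (simp only: qf_lincomb polar_lincomb_left) (simp add: algebra_simps power2_eq_square)
qed

lemma qf_extend:
  "qf (Suc n) c (x(n := t)) = qf n c x + t * (\<Sum>i<n. c i n * x i) + t^2 * c n n"
proof -
  have "qf (Suc n) c (x(n := t)) = (\<Sum>i<n. c i n * x i * t + (\<Sum>j\<in>{i..<n}. c i j * x i * x j)) + c n n * t * t"
    unfolding qf_def by (simp add: atLeastLessThanSuc)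
  then show ?thesis
    by (simp add: qf_def sum.distrib sum_distrib_left algebra_simps power2_eq_square)
qed

end

lemma all_less_3: "(\<forall>i<3. P i) \<longleftrightarrow> P 0 \<and> P 1 \<and> P (2::nat)"
  by (auto simp: eval_nat_numeral less_Suc_eq)

lemma vecs3_eqI:
  assumes "x \<in> vecs 3" "y \<in> vecs 3" "x 0 = y 0" "x 1 = y 1" "x 2 = y 2"
  shows "x = y"
proof
  fix i
  show "x i = y i"
    using assms by (cases "i < 3") (auto simp: vecs_def eval_nat_numeral less_Suc_eq)
qed

definition det3 :: "('a::comm_ring_1) vect \<Rightarrow> 'a vect \<Rightarrow> 'a vect \<Rightarrow> 'a" where
  "det3 x y z = x 0 * (y 1 * z 2 - y 2 * z 1) - x 1 * (y 0 * z 2 - y 2 * z 0) + x 2 * (y 0 * z 1 - y 1 * z 0)"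

lemma cramer3:
  fixes x y z w :: "('a::field) vect"
  assumes "det3 x y z \<noteq> 0" and "w \<in> vecs 3" "x \<in> vecs 3" "y \<in> vecs 3" "z \<in> vecs 3"
  shows "w = (\<lambda>i. det3 w y z / det3 x y z * x i + det3 x w z / det3 x y z * y i + det3 x y w / det3 x y z * z i)"
  by (rule vecs3_eqI) (use assms in \<open>simp_all add: vecs_def field_simps, simp_all add: det3_def algebra_simps\<close>)

text \<open>If some \<open>2 \<times> 2\<close> minor of \<open>x, y, z\<close> is nonzero, the cofactors of the remaining coordinate
  give a dependency; otherwise \<open>x\<close> and \<open>y\<close> are proportional.\<close>

lemma det3_eq_0_dependent:
  fixes x y z :: "('a::field) vect"
  assumes det: "det3 x y z = 0" and vecs: "x \<in> vecs 3" "y \<in> vecs 3" "z \<in> vecs 3"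
  shows "\<exists>a b d. (a \<noteq> 0 \<or> b \<noteq> 0 \<or> d \<noteq> 0) \<and> (\<lambda>i. a * x i + b * y i + d * z i) = zvec"
proof -
  have dependent: "\<exists>a b d. (a \<noteq> 0 \<or> b \<noteq> 0 \<or> d \<noteq> 0) \<and> (\<lambda>i. a * x i + b * y i + d * z i) = zvec"
    if "a \<noteq> 0 \<or> b \<noteq> 0 \<or> d \<noteq> 0" "\<forall>i<3. a * x i + b * y i + d * z i = 0" for a b d
  proof -
    have "(\<lambda>i. a * x i + b * y i + d * z i) = zvec"
      by (rule vecs3_eqI) (use that vecs in \<open>simp_all add: vecs_lincomb vecs_def zvec_def all_less_3\<close>)
    then show ?thesis using that(1) by blast
  qed
  consider
      "y 1 * z 2 - z 1 * y 2 \<noteq> 0 \<or> z 1 * x 2 - x 1 * z 2 \<noteq> 0 \<or> x 1 * y 2 - y 1 * x 2 \<noteq> 0"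
    | "y 0 * z 2 - z 0 * y 2 \<noteq> 0 \<or> z 0 * x 2 - x 0 * z 2 \<noteq> 0 \<or> x 0 * y 2 - y 0 * x 2 \<noteq> 0"
    | "y 0 * z 1 - z 0 * y 1 \<noteq> 0 \<or> z 0 * x 1 - x 0 * z 1 \<noteq> 0 \<or> x 0 * y 1 - y 0 * x 1 \<noteq> 0"
    | "x 0 * y 1 = y 0 * x 1" "x 0 * y 2 = y 0 * x 2" "x 1 * y 2 = y 1 * x 2"
    by force
  then show ?thesis
  proof cases
    case 1
    show ?thesis
      by (rule dependent[OF 1]) (use det in \<open>simp add: all_less_3 det3_def algebra_simps\<close>)
  next
    case 2
    show ?thesis
      by (rule dependent[OF 2]) (use det in \<open>simp add: all_less_3 det3_def algebra_simps\<close>)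
  next
    case 3
    show ?thesis
      by (rule dependent[OF 3]) (use det in \<open>simp add: all_less_3 det3_def algebra_simps\<close>)
  next
    case 4
    then have minors: "\<forall>i<3. \<forall>j<3. x i * y j = x j * y i"
      by (simp add: all_less_3 mult.commute)
    show ?thesis
    proof (cases "\<exists>j<3. x j \<noteq> 0")
      case True
      then obtain j where "j < 3" "x j \<noteq> 0" by blast
      then show ?thesis
        by (intro dependent[of "y j" "- x j" 0]) (use minors in \<open>auto simp: algebra_simps\<close>)
    next
      case False
      then show ?thesis by (intro dependent[of 1 0 0]) auto
    qed
  qed
qed

definition indep2 :: "('a::field) vect \<Rightarrow> 'a vect \<Rightarrow> bool" where
  "indep2 x y \<longleftrightarrow> (\<forall>a b. (\<lambda>i. a * x i + b * y i) = zvec \<longrightarrow> a = 0 \<and> b = 0)"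

lemma indep2I:
  fixes x y :: "('a::field) vect"
  assumes "x \<noteq> zvec" and not_multiple: "\<And>t. y \<noteq> (\<lambda>i. t * x i)"
  shows "indep2 x y"
  unfolding indep2_def
proof (intro allI impI)
  fix a b assume dep: "(\<lambda>i. a * x i + b * y i) = zvec"
  have "b = 0"
  proof (rule ccontr)
    assume "b \<noteq> 0"
    then have "y = (\<lambda>i. (- a / b) * x i)"
      using dep by (auto simp: fun_eq_iff zvec_def field_simps add_eq_0_iff2)
    then show False using not_multiple by blast
  qed
  then show "a = 0 \<and> b = 0" using dep \<open>x \<noteq> zvec\<close> by (auto simp: fun_eq_iff zvec_def)
qed

lemma indep2_commute: "indep2 x y \<Longrightarrow> indep2 y x"
  unfolding indep2_def by (metis (no_types, lifting) add.commute ext)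

lemma det3_cycle: "det3 x y z = det3 y z x"
  by (simp add: det3_def algebra_simps)

lemma det3_eq_0_span:
  fixes x y z :: "('a::field) vect"
  assumes "det3 x y z = 0" "x \<in> vecs 3" "y \<in> vecs 3" "z \<in> vecs 3" and ind: "indep2 x y"
  obtains a b where "z = (\<lambda>i. a * x i + b * y i)"
proof -
  obtain a b d where nontrivial: "a \<noteq> 0 \<or> b \<noteq> 0 \<or> d \<noteq> 0"
    and dep: "(\<lambda>i. a * x i + b * y i + d * z i) = zvec"
    using det3_eq_0_dependent[OF assms(1-4)] by blast
  have "d \<noteq> 0" using ind dep nontrivial unfolding indep2_def by fastforce
  have "z = (\<lambda>i. (- a / d) * x i + (- b / d) * y i)"
  proof
    fix i
    have "a * x i + b * y i + d * z i = 0" using fun_cong[OF dep, of i] by (simp add: zvec_def)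
    then have "d * z i = - a * x i - b * y i" by algebra
    then show "z i = (- a / d) * x i + (- b / d) * y i" using \<open>d \<noteq> 0\<close> by (simp add: field_simps)
  qed
  then show ?thesis by (rule that)
qed

lemma polar_det3_ne_0:
  fixes c :: "('a::field) matr"
  assumes vecs: "x \<in> vecs 3" "y \<in> vecs 3" "w \<in> vecs 3" and ind: "indep2 x y"
    and "polar 3 c x x = 0" "polar 3 c x y = 0" "polar 3 c x w \<noteq> 0"
  shows "det3 x y w \<noteq> 0"
proof
  assume "det3 x y w = 0"
  then obtain a b where "w = (\<lambda>i. a * x i + b * y i)" using det3_eq_0_span vecs ind by blast
  then have "polar 3 c x w = 0" using assms(5,6) by (simp add: polar_lincomb_right)
  then show False using assms(7) by simp
qed

lemma polar_eq_0_if_det3_ne_0: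
  fixes c :: "('a::field) matr"
  assumes "det3 x y w \<noteq> 0" "x \<in> vecs 3" "y \<in> vecs 3" "w \<in> vecs 3" "v \<in> vecs 3"
    and "polar 3 c z x = 0" "polar 3 c z y = 0" "polar 3 c z w = 0"
  shows "polar 3 c z v = 0"
proof -
  have "polar 3 c z v = polar 3 c z (\<lambda>i. det3 v y w / det3 x y w * x i
      + det3 x v w / det3 x y w * y i + det3 x y v / det3 x y w * w i)"
    using cramer3[OF assms(1,5,2-4)] by (rule arg_cong)
  also have "\<dots> = 0" using assms(6-8) by (simp only: polar_lincomb3_right) simp
  finally show ?thesis .
qed

lemma nondeg_conic_contains_no_line:
  fixes c :: "('a::field) matr"
  assumes nd: "nondeg 3 c" and x: "x \<in> vecs 3" and y: "y \<in> vecs 3" and ind: "indep2 x y"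
    and on_conic: "\<And>a b. qf 3 c (\<lambda>i. a * x i + b * y i) = 0"
  shows False
proof -
  have qx: "qf 3 c x = 0" and qy: "qf 3 c y = 0" using on_conic[of 1 0] on_conic[of 0 1] by simp_all
  have pxy: "polar 3 c x y = 0" using on_conic[of 1 1] qx qy by (simp add: polar_def)
  have "x \<noteq> zvec"
  proof
    assume "x = zvec"
    then have "(\<lambda>i. 1 * x i + 0 * y i) = zvec" by (simp add: zvec_def)
    then have "(1::'a) = 0" using ind unfolding indep2_def by blast
    then show False by simp
  qed
  then obtain w where w: "w \<in> vecs 3" and pxw: "polar 3 c x w \<noteq> 0"
    using nd x qx unfolding nondeg_def by blast
  text \<open>The point \<open>z\<close> of the line conjugate to \<open>w\<close> is conjugate to the whole plane, so singular.\<close>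
  define z where "z = (\<lambda>i. (- (polar 3 c y w / polar 3 c x w)) * x i + 1 * y i)"
  have z: "z \<in> vecs 3" unfolding z_def by (rule vecs_lincomb[OF x y])
  have "z \<noteq> zvec"
  proof
    assume "z = zvec"
    then have "(1::'a) = 0" using ind unfolding indep2_def z_def by blast
    then show False by simp
  qed
  moreover have "qf 3 c z = 0" unfolding z_def by (rule on_conic)
  ultimately obtain w' where w': "w' \<in> vecs 3" and pzw': "polar 3 c z w' \<noteq> 0"
    using nd z unfolding nondeg_def by blast
  have pz: "polar 3 c z x = 0" "polar 3 c z y = 0" "polar 3 c z w = 0"
    unfolding z_def polar_lincomb_left using pxw
    by (simp_all add: polar_self qx qy pxy polar_commute[of 3 c y x])
  have "det3 x y w \<noteq> 0" using polar_det3_ne_0[OF x y w ind _ pxy pxw] qx by (simp add: polar_self)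
  then show False using polar_eq_0_if_det3_ne_0[OF _ x y w w' pz] pzw' by blast
qed

section \<open>Matrices\<close>

lemma mat_mul_vec_vecs: "mat_mul_vec n M x \<in> vecs n"
  unfolding mat_mul_vec_def vecs_def by simp

lemma mat_mul_vec_zvec: "mat_mul_vec n M zvec = (zvec :: ('a::semiring_0) vect)"
  by (simp add: mat_mul_vec_def zvec_def fun_eq_iff)

context
  fixes M :: "('a::comm_ring_1) matr"
begin

lemma mat_mul_vec_lincomb3:
  "mat_mul_vec n M (\<lambda>i. a * x i + b * y i + d * z i)
     = (\<lambda>i. a * mat_mul_vec n M x i + b * mat_mul_vec n M y i + d * mat_mul_vec n M z i)"
  by (simp add: mat_mul_vec_def fun_eq_iff sum.distrib sum_distrib_left algebra_simps)

lemma mat_mul_vec_lincomb: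
  "mat_mul_vec n M (\<lambda>i. a * x i + b * y i) = (\<lambda>i. a * mat_mul_vec n M x i + b * mat_mul_vec n M y i)"
  using mat_mul_vec_lincomb3[of n a x b y 0 y] by simp

lemma mat_mul_vec_scale: "mat_mul_vec n M (\<lambda>i. a * x i) = (\<lambda>i. a * mat_mul_vec n M x i)"
  using mat_mul_vec_lincomb[of n a x 0 x] by simp

lemma mat_mul_vec_mat_mul: "mat_mul_vec n (mat_mul n M P) x = mat_mul_vec n M (mat_mul_vec n P x)"
proof
  fix i
  have "(\<Sum>j<n. (\<Sum>k<n. M i k * P k j) * x j) = (\<Sum>j<n. \<Sum>k<n. M i k * (P k j * x j))"
    by (simp add: sum_distrib_right mult.assoc)
  also have "\<dots> = (\<Sum>k<n. M i k * (\<Sum>j<n. P k j * x j))"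
    by (subst sum.swap) (simp add: sum_distrib_left)
  finally show "mat_mul_vec n (mat_mul n M P) x i = mat_mul_vec n M (mat_mul_vec n P x) i"
    by (simp add: mat_mul_vec_def mat_mul_def)
qed

lemma mat_mul_vec_mat_comb3:
  "mat_mul_vec n (\<lambda>i j. a * M i j + b * P i j + d * Q i j) x
     = (\<lambda>i. a * mat_mul_vec n M x i + b * mat_mul_vec n P x i + d * mat_mul_vec n Q x i)"
  by (simp add: mat_mul_vec_def fun_eq_iff sum.distrib sum_distrib_left algebra_simps)

end

lemma mat_mul_vec_mat_id:
  assumes "x \<in> vecs n"
  shows "mat_mul_vec n (mat_id n) x = (x :: ('a::semiring_1) vect)"
proof
  fix i
  show "mat_mul_vec n (mat_id n) x i = x i"
  proof (cases "i < n")
    case True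
    have "(\<Sum>j<n. mat_id n i j * x j) = (\<Sum>j<n. if j = i then x j else 0)"
      using True by (intro sum.cong) (auto simp: mat_id_def)
    then show ?thesis using True by (simp add: mat_mul_vec_def)
  next
    case False
    then show ?thesis using assms unfolding vecs_def mat_mul_vec_def by simp
  qed
qed

lemma mat_pow_Suc: "mat_pow n M (Suc k) = mat_mul n M (mat_pow n M k)"
  by (simp add: mat_pow_def)

lemma mat_pow_add_apply:
  "x \<in> vecs n \<Longrightarrow> mat_mul_vec n (mat_pow n M (a + b)) x
     = mat_mul_vec n (mat_pow n M a) (mat_mul_vec n (mat_pow n M b) (x :: ('a::comm_ring_1) vect))"
  by (induction a) (simp_all add: mat_pow_def mat_mul_vec_mat_id mat_mul_vec_vecs mat_mul_vec_mat_mul)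

lemma mat_pow_1_apply: "x \<in> vecs n \<Longrightarrow> mat_mul_vec n (mat_pow n M 1) x = mat_mul_vec n M (x :: ('a::comm_ring_1) vect)"
  by (simp add: mat_pow_def mat_mul_vec_mat_mul mat_mul_vec_mat_id)

lemma mat_pow_2_apply:
  "x \<in> vecs n \<Longrightarrow> mat_mul_vec n (mat_pow n M 2) x = mat_mul_vec n M (mat_mul_vec n M (x :: ('a::comm_ring_1) vect))"
  by (simp add: mat_pow_def numeral_2_eq_2 mat_mul_vec_mat_mul mat_mul_vec_mat_id)

text \<open>Matrices are total functions on \<open>nat \<times> nat\<close>, so equal action on vectors determines them
  only together with vanishing outside the \<open>n \<times> n\<close> block.\<close>

definition mat_supported :: "nat \<Rightarrow> ('a::zero) matr \<Rightarrow> bool" where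
  "mat_supported n M \<longleftrightarrow> (\<forall>i j. n \<le> i \<or> n \<le> j \<longrightarrow> M i j = 0)"

lemma mat_supported_mat_pow: "mat_supported n (mat_pow n M k)"
  by (cases k) (auto simp: mat_supported_def mat_pow_def mat_mul_def mat_id_def)

lemma mat_eqI:
  fixes M P :: "('a::comm_ring_1) matr"
  assumes "mat_supported n M" "mat_supported n P"
    and "\<And>x. x \<in> vecs n \<Longrightarrow> mat_mul_vec n M x = mat_mul_vec n P x"
  shows "M = P"
proof (intro ext)
  fix i j
  show "M i j = P i j"
  proof (cases "i < n \<and> j < n")
    case True
    define e where "e = (\<lambda>k. if k = j then 1 else 0 :: 'a)"
    have "e \<in> vecs n" using True unfolding e_def vecs_def by simp
    then have "mat_mul_vec n M e i = mat_mul_vec n P e i" using assms(3) by simp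
    moreover have "(\<Sum>k<n. Q i k * e k) = (\<Sum>k<n. if k = j then Q i k else 0)" for Q :: "'a matr"
      by (intro sum.cong) (auto simp: e_def)
    ultimately show ?thesis using True by (simp add: mat_mul_vec_def)
  next
    case False
    then show ?thesis using assms(1,2) by (auto simp: mat_supported_def not_less)
  qed
qed

definition eigenvector :: "nat \<Rightarrow> ('a::semiring_0) matr \<Rightarrow> 'a vect \<Rightarrow> 'a \<Rightarrow> bool" where
  "eigenvector n M w l \<longleftrightarrow> w \<in> vecs n \<and> w \<noteq> zvec \<and> mat_mul_vec n M w = (\<lambda>i. l * w i)"

lemma eigenvector_mat_pow:
  fixes M :: "('a::comm_ring_1) matr"
  assumes "eigenvector n M w l"
  shows "mat_mul_vec n (mat_pow n M k) w = (\<lambda>i. l ^ k * w i)"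
proof (induction k)
  case 0
  then show ?case using assms by (simp add: eigenvector_def mat_pow_def mat_mul_vec_mat_id)
next
  case (Suc k)
  have "mat_mul_vec n (mat_pow n M (Suc k)) w = mat_mul_vec n M (\<lambda>i. l ^ k * w i)"
    using Suc by (simp add: mat_pow_Suc mat_mul_vec_mat_mul)
  also have "\<dots> = (\<lambda>i. l ^ k * (l * w i))"
    using assms by (simp add: mat_mul_vec_scale eigenvector_def)
  finally show ?case by (simp add: mult_ac)
qed

definition scalar_mat :: "nat \<Rightarrow> ('a::semiring_1) matr \<Rightarrow> bool" where
  "scalar_mat n M \<longleftrightarrow> (\<exists>d. M = (\<lambda>i j. d * mat_id n i j))"

lemma mat_mul_vec_scalar_mat:
  "x \<in> vecs n \<Longrightarrow> mat_mul_vec n (\<lambda>i j. d * mat_id n i j) x = (\<lambda>i. (d * x i :: 'a::comm_ring_1))"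
  using mat_mul_vec_mat_comb3[of n d "mat_id n" 0 "mat_id n" 0 "mat_id n" x]
  by (simp add: mat_mul_vec_mat_id)

lemma mat_mul_vec_minus_scalar:
  "x \<in> vecs n \<Longrightarrow> mat_mul_vec n (\<lambda>i j. M i j - d * mat_id n i j) x
     = (\<lambda>i. mat_mul_vec n M x i - d * x i :: 'a::comm_ring_1)"
  using mat_mul_vec_mat_comb3[of n 1 M "- d" "mat_id n" 0 "mat_id n" x]
  by (simp add: mat_mul_vec_mat_id)

lemma eigenvectors_det3_ne_0:
  fixes M :: "('a::field) matr"
  assumes eig: "eigenvector 3 M w0 l0" "eigenvector 3 M w1 l1" "eigenvector 3 M w2 l2"
    and distinct: "l0 \<noteq> l1" "l0 \<noteq> l2" "l1 \<noteq> l2"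
  shows "det3 w0 w1 w2 \<noteq> 0"
proof
  note w = eig[unfolded eigenvector_def]
  assume "det3 w0 w1 w2 = 0"
  then obtain a b d where nontrivial: "a \<noteq> 0 \<or> b \<noteq> 0 \<or> d \<noteq> 0"
    and dep: "(\<lambda>i. a * w0 i + b * w1 i + d * w2 i) = zvec"
    using det3_eq_0_dependent w by blast
  have M_dep: "(\<lambda>i. a * l0 * w0 i + b * l1 * w1 i + d * l2 * w2 i) = zvec"
    using arg_cong[OF dep, of "mat_mul_vec 3 M"] w
    by (simp add: mat_mul_vec_lincomb3 mat_mul_vec_zvec mult.assoc)
  have MM_dep: "(\<lambda>i. a * l0 * l0 * w0 i + b * l1 * l1 * w1 i + d * l2 * l2 * w2 i) = zvec"
    using arg_cong[OF M_dep, of "mat_mul_vec 3 M"] w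
    by (simp add: mat_mul_vec_lincomb3 mat_mul_vec_zvec mat_mul_vec_scale mult.assoc)
  have "a * ((l0 - l1) * (l0 - l2)) * w0 i = 0 \<and> b * ((l1 - l0) * (l1 - l2)) * w1 i = 0
      \<and> d * ((l2 - l0) * (l2 - l1)) * w2 i = 0" for i
  proof -
    have "a * w0 i + b * w1 i + d * w2 i = 0" "a * l0 * w0 i + b * l1 * w1 i + d * l2 * w2 i = 0"
      "a * l0 * l0 * w0 i + b * l1 * l1 * w1 i + d * l2 * l2 * w2 i = 0"
      using fun_cong[OF dep, of i] fun_cong[OF M_dep, of i] fun_cong[OF MM_dep, of i]
      by (simp_all add: zvec_def)
    then show ?thesis by algebra
  qed
  moreover obtain i0 i1 i2 where "w0 i0 \<noteq> 0" "w1 i1 \<noteq> 0" "w2 i2 \<noteq> 0"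
    using w by (auto simp: zvec_def fun_eq_iff)
  ultimately have "a = 0" "b = 0" "d = 0"
    using distinct by (metis mult_eq_0_iff right_minus_eq)+
  then show False using nontrivial by simp
qed

definition trace3 :: "('a::comm_ring_1) matr \<Rightarrow> 'a" where
  "trace3 M = M 0 0 + M 1 1 + M 2 2"

definition minors3 :: "('a::comm_ring_1) matr \<Rightarrow> 'a" where
  "minors3 M = M 0 0 * M 1 1 - M 0 1 * M 1 0 + M 0 0 * M 2 2 - M 0 2 * M 2 0
     + M 1 1 * M 2 2 - M 1 2 * M 2 1"

definition charpoly3 :: "('a::comm_ring_1) matr \<Rightarrow> 'a poly" where
  "charpoly3 M = [:- det3 (M 0) (M 1) (M 2), minors3 M, - trace3 M, 1:]"

lemma poly_charpoly3:
  "poly (charpoly3 M) y = y ^ 3 - trace3 M * y\<^sup>2 + minors3 M * y - det3 (M 0) (M 1) (M 2)"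
  by (simp add: charpoly3_def algebra_simps power2_eq_square power3_eq_cube)

lemma sum_lessThan_3: "(\<Sum>j<(3::nat). g j) = g 0 + g 1 + (g 2 :: 'a::comm_monoid_add)"
  by (simp add: eval_nat_numeral ac_simps)

lemma mat_mul_vec_3:
  "mat_mul_vec 3 M x = (\<lambda>i. if i < 3 then M i 0 * x 0 + M i 1 * x 1 + M i 2 * x 2 else 0)"
  unfolding mat_mul_vec_def by (rule ext, subst sum_lessThan_3, simp)

lemma cayley_hamilton3:
  fixes M :: "('a::comm_ring_1) matr"
  assumes "x \<in> vecs 3"
  shows "mat_mul_vec 3 M (mat_mul_vec 3 M (mat_mul_vec 3 M x))
    = (\<lambda>i. trace3 M * mat_mul_vec 3 M (mat_mul_vec 3 M x) i - minors3 M * mat_mul_vec 3 M x i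
            + det3 (M 0) (M 1) (M 2) * x i)"
proof (rule vecs3_eqI)
  show "(\<lambda>i. trace3 M * mat_mul_vec 3 M (mat_mul_vec 3 M x) i - minors3 M * mat_mul_vec 3 M x i
            + det3 (M 0) (M 1) (M 2) * x i) \<in> vecs 3"
    using assms mat_mul_vec_vecs[of 3 M x] mat_mul_vec_vecs[of 3 M "mat_mul_vec 3 M x"]
    unfolding vecs_def by simp
qed (rule mat_mul_vec_vecs, (simp add: mat_mul_vec_3 trace3_def minors3_def det3_def algebra_simps)+)

text \<open>\<open>pow_coeffs M k = (r0, r1, r2)\<close> are the coefficients of the remainder of \<open>X ^ k\<close> modulo the
  characteristic polynomial of \<open>M\<close>, so that \<open>M ^ k = r0 + r1 M + r2 M ^ 2\<close> by Cayley-Hamilton.\<close>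

primrec pow_coeffs :: "('a::comm_ring_1) matr \<Rightarrow> nat \<Rightarrow> 'a \<times> 'a \<times> 'a" where
  "pow_coeffs M 0 = (1, 0, 0)"
| "pow_coeffs M (Suc k) = (case pow_coeffs M k of (r0, r1, r2) \<Rightarrow>
     (r2 * det3 (M 0) (M 1) (M 2), r0 - r2 * minors3 M, r1 + r2 * trace3 M))"

definition mat_poly2 :: "('a::comm_ring_1) matr \<Rightarrow> 'a \<times> 'a \<times> 'a \<Rightarrow> 'a matr" where
  "mat_poly2 M r = (case r of (r0, r1, r2) \<Rightarrow>
     \<lambda>i j. r0 * mat_id 3 i j + r1 * mat_pow 3 M 1 i j + r2 * mat_pow 3 M 2 i j)"

lemma mat_poly2_apply:
  fixes M :: "('a::comm_ring_1) matr"
  assumes "x \<in> vecs 3"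
  shows "mat_mul_vec 3 (mat_poly2 M (r0, r1, r2)) x
    = (\<lambda>i. r0 * x i + r1 * mat_mul_vec 3 M x i + r2 * mat_mul_vec 3 M (mat_mul_vec 3 M x) i)"
  using mat_pow_1_apply[OF assms, of M] mat_pow_2_apply[OF assms, of M] assms
  by (simp add: mat_poly2_def mat_mul_vec_mat_comb3 mat_mul_vec_mat_id)

lemma mat_supported_mat_poly2: "mat_supported 3 (mat_poly2 M r)"
  using mat_supported_mat_pow[of 3 M 0] mat_supported_mat_pow[of 3 M 1] mat_supported_mat_pow[of 3 M 2]
  by (auto simp: mat_supported_def mat_poly2_def mat_pow_def split: prod.splits)

lemma mat_pow_eq_mat_poly2:
  fixes M :: "('a::comm_ring_1) matr"
  shows "mat_pow 3 M k = mat_poly2 M (pow_coeffs M k)"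
proof (rule mat_eqI[OF mat_supported_mat_pow mat_supported_mat_poly2])
  fix x :: "'a vect"
  assume x: "x \<in> vecs 3"
  show "mat_mul_vec 3 (mat_pow 3 M k) x = mat_mul_vec 3 (mat_poly2 M (pow_coeffs M k)) x"
  proof (induction k)
    case 0
    then show ?case using x by (simp add: mat_poly2_apply mat_pow_def mat_mul_vec_mat_id)
  next
    case (Suc k)
    obtain r0 r1 r2 where r: "pow_coeffs M k = (r0, r1, r2)" by (cases "pow_coeffs M k")
    have "mat_mul_vec 3 (mat_pow 3 M (Suc k)) x
        = mat_mul_vec 3 M (\<lambda>i. r0 * x i + r1 * mat_mul_vec 3 M x i + r2 * mat_mul_vec 3 M (mat_mul_vec 3 M x) i)"
      using Suc x by (simp add: mat_pow_Suc mat_mul_vec_mat_mul r mat_poly2_apply)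
    also have "\<dots> = (\<lambda>i. r0 * mat_mul_vec 3 M x i + r1 * mat_mul_vec 3 M (mat_mul_vec 3 M x) i
        + r2 * mat_mul_vec 3 M (mat_mul_vec 3 M (mat_mul_vec 3 M x)) i)"
      by (simp add: mat_mul_vec_lincomb3)
    also have "\<dots> = mat_mul_vec 3 (mat_poly2 M (pow_coeffs M (Suc k))) x"
      using x by (simp add: cayley_hamilton3 r mat_poly2_apply algebra_simps)
    finally show ?case .
  qed
qed

lemma monom_pow_coeffs:
  fixes M :: "('a::comm_ring_1) matr"
  assumes "pow_coeffs M k = (r0, r1, r2)"
  shows "\<exists>s. monom 1 k = charpoly3 M * s + [:r0, r1, r2:]"
  using assms
proof (induction k arbitrary: r0 r1 r2)
  case 0
  then show ?case by (intro exI[of _ 0]) (simp add: monom_0 one_pCons)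
next
  case (Suc k)
  obtain t0 t1 t2 where t: "pow_coeffs M k = (t0, t1, t2)" by (cases "pow_coeffs M k")
  then obtain s where s: "monom 1 k = charpoly3 M * s + [:t0, t1, t2:]" using Suc.IH by blast
  have "monom 1 (Suc k) = pCons 0 (charpoly3 M * s) + smult t2 (charpoly3 M)
      + [:t2 * det3 (M 0) (M 1) (M 2), t0 - t2 * minors3 M, t1 + t2 * trace3 M:]"
    by (simp add: monom_Suc s charpoly3_def algebra_simps)
  also have "\<dots> = charpoly3 M * (pCons 0 s + [:t2:]) + [:r0, r1, r2:]"
    using Suc.prems t by (simp add: distrib_left mult_pCons_right)
  finally show ?case by blast
qed

lemma charpoly3_root_eigenvector:
  fixes M :: "('a::field) matr"
  assumes "poly (charpoly3 M) l = 0"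
  shows "\<exists>w. eigenvector 3 M w l"
proof -
  define col where "col j = (\<lambda>i. if i < 3 then M i j - (if i = j then l else 0) else 0)" for j :: nat
  have col_vecs: "col j \<in> vecs 3" for j unfolding col_def vecs_def by simp
  have "det3 (col 0) (col 1) (col 2) = - poly (charpoly3 M) l"
    by (simp add: col_def det3_def poly_charpoly3 trace3_def minors3_def) algebra
  then have "det3 (col 0) (col 1) (col 2) = 0" using assms by simp
  then obtain a b d where nontrivial: "a \<noteq> 0 \<or> b \<noteq> 0 \<or> d \<noteq> 0"
    and dep: "(\<lambda>i. a * col 0 i + b * col 1 i + d * col 2 i) = zvec"
    using det3_eq_0_dependent col_vecs by blast
  define w where "w = (\<lambda>i::nat. if i = 0 then a else if i = 1 then b else if i = 2 then d else 0)"
  have w: "w \<in> vecs 3" "w \<noteq> zvec"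
  proof -
    show "w \<in> vecs 3" unfolding w_def vecs_def by simp
    have "w 0 \<noteq> 0 \<or> w 1 \<noteq> 0 \<or> w 2 \<noteq> 0" using nontrivial by (simp add: w_def)
    then show "w \<noteq> zvec" by (auto simp: zvec_def)
  qed
  have dep_i: "a * col 0 i + b * col 1 i + d * col 2 i = 0" for i
    using fun_cong[OF dep, of i] by (simp add: zvec_def)
  have "mat_mul_vec 3 M w = (\<lambda>i. l * w i)"
    by (rule vecs3_eqI[OF mat_mul_vec_vecs vecs_scale[OF w(1)]])
      (use dep_i[of 0] dep_i[of 1] dep_i[of 2] in \<open>simp_all add: mat_mul_vec_3 w_def col_def algebra_simps\<close>)
  then show ?thesis using w by (auto simp: eigenvector_def)
qed

section \<open>Conics through the eigenvectors of a diagonalisable matrix\<close>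

locale eigenbasis_conic =
  fixes M Q :: "('a::field) matr" and w0 w1 w2 :: "'a vect" and l0 l1 l2 :: 'a
  assumes vecs: "w0 \<in> vecs 3" "w1 \<in> vecs 3" "w2 \<in> vecs 3"
    and basis: "det3 w0 w1 w2 \<noteq> 0"
    and eigen: "mat_mul_vec 3 M w0 = (\<lambda>i. l0 * w0 i)" "mat_mul_vec 3 M w1 = (\<lambda>i. l1 * w1 i)"
      "mat_mul_vec 3 M w2 = (\<lambda>i. l2 * w2 i)"
    and on_conic: "qf 3 Q w0 = 0" "qf 3 Q w1 = 0" "qf 3 Q w2 = 0"
begin

definition coord0 :: "'a vect \<Rightarrow> 'a" where "coord0 y = det3 y w1 w2 / det3 w0 w1 w2"
definition coord1 :: "'a vect \<Rightarrow> 'a" where "coord1 y = det3 w0 y w2 / det3 w0 w1 w2"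
definition coord2 :: "'a vect \<Rightarrow> 'a" where "coord2 y = det3 w0 w1 y / det3 w0 w1 w2"

lemma coords_expand: "y \<in> vecs 3 \<Longrightarrow> y = (\<lambda>i. coord0 y * w0 i + coord1 y * w1 i + coord2 y * w2 i)"
  unfolding coord0_def coord1_def coord2_def by (rule cramer3[OF basis _ vecs])

lemma coords_comb:
  "coord0 (\<lambda>i. a * w0 i + b * w1 i + d * w2 i) = a"
  "coord1 (\<lambda>i. a * w0 i + b * w1 i + d * w2 i) = b"
  "coord2 (\<lambda>i. a * w0 i + b * w1 i + d * w2 i) = d"
proof -
  let ?y = "\<lambda>i. a * w0 i + b * w1 i + d * w2 i"
  have "det3 ?y w1 w2 = a * det3 w0 w1 w2" "det3 w0 ?y w2 = b * det3 w0 w1 w2"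
    "det3 w0 w1 ?y = d * det3 w0 w1 w2"
    by (simp_all add: det3_def algebra_simps)
  then show "coord0 ?y = a" "coord1 ?y = b" "coord2 ?y = d"
    using basis by (simp_all add: coord0_def coord1_def coord2_def)
qed

lemma coords_lincomb3:
  "coord0 (\<lambda>i. a * x i + b * y i + d * z i) = a * coord0 x + b * coord0 y + d * coord0 z"
  "coord1 (\<lambda>i. a * x i + b * y i + d * z i) = a * coord1 x + b * coord1 y + d * coord1 z"
  "coord2 (\<lambda>i. a * x i + b * y i + d * z i) = a * coord2 x + b * coord2 y + d * coord2 z"
  by (simp_all add: coord0_def coord1_def coord2_def det3_def add_divide_distrib[symmetric]
      times_divide_eq_right[symmetric] algebra_simps)

lemma coords_image:
  assumes "y \<in> vecs 3"
  shows "coord0 (mat_mul_vec 3 M y) = l0 * coord0 y" "coord1 (mat_mul_vec 3 M y) = l1 * coord1 y"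
    "coord2 (mat_mul_vec 3 M y) = l2 * coord2 y"
proof -
  have "mat_mul_vec 3 M y = mat_mul_vec 3 M (\<lambda>i. coord0 y * w0 i + coord1 y * w1 i + coord2 y * w2 i)"
    by (rule arg_cong[OF coords_expand[OF assms]])
  also have "\<dots> = (\<lambda>i. (l0 * coord0 y) * w0 i + (l1 * coord1 y) * w1 i + (l2 * coord2 y) * w2 i)"
    by (simp only: mat_mul_vec_lincomb3 eigen) (simp add: mult_ac)
  finally have "mat_mul_vec 3 M y = \<dots>" .
  then show "coord0 (mat_mul_vec 3 M y) = l0 * coord0 y" "coord1 (mat_mul_vec 3 M y) = l1 * coord1 y"
    "coord2 (mat_mul_vec 3 M y) = l2 * coord2 y"
    by (simp_all add: coords_comb)
qed

lemma qf_coords: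
  assumes "y \<in> vecs 3"
  shows "qf 3 Q y = coord0 y * coord1 y * polar 3 Q w0 w1 + coord0 y * coord2 y * polar 3 Q w0 w2
    + coord1 y * coord2 y * polar 3 Q w1 w2"
proof -
  have "qf 3 Q y = qf 3 Q (\<lambda>i. coord0 y * w0 i + coord1 y * w1 i + coord2 y * w2 i)"
    by (rule arg_cong[OF coords_expand[OF assms]])
  then show ?thesis by (simp add: qf_lincomb3 on_conic)
qed

lemma polar_coords:
  assumes "y \<in> vecs 3" "z \<in> vecs 3"
  shows "polar 3 Q y z = (coord0 y * coord1 z + coord1 y * coord0 z) * polar 3 Q w0 w1
    + (coord0 y * coord2 z + coord2 y * coord0 z) * polar 3 Q w0 w2
    + (coord1 y * coord2 z + coord2 y * coord1 z) * polar 3 Q w1 w2"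
proof -
  let ?s = "\<lambda>i. 1 * y i + 1 * z i + 0 * z i"
  have s: "?s \<in> vecs 3" using vecs_lincomb[OF assms, of 1 1] by simp
  have "polar 3 Q y z = qf 3 Q ?s - qf 3 Q y - qf 3 Q z" by (simp add: polar_def)
  also have "\<dots> = (coord0 y * coord1 z + coord1 y * coord0 z) * polar 3 Q w0 w1
    + (coord0 y * coord2 z + coord2 y * coord0 z) * polar 3 Q w0 w2
    + (coord1 y * coord2 z + coord2 y * coord1 z) * polar 3 Q w1 w2"
    unfolding qf_coords[OF s] qf_coords[OF assms(1)] qf_coords[OF assms(2)] coords_lincomb3
    by (simp add: algebra_simps)
  finally show ?thesis .
qed

text \<open>With respect to the eigenbasis the conic is \<open>a0 a1 P01 + a0 a2 P02 + a1 a2 P12\<close>, since it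
  passes through the basis points, and \<open>M\<close> multiplies the coordinate \<open>ai\<close> by \<open>li\<close>. The two
  relations below are then polynomial identities modulo the equations of the conic at \<open>x\<close> and
  \<open>M x\<close>: the first polar form equals \<open>(l0 + l1 + l2) Q(M x) - l0 l1 l2 Q(x)\<close>, and in the second
  the coefficient of \<open>ai aj Pij\<close> has the form \<open>\<alpha> + \<beta> li lj\<close> with \<open>\<alpha>, \<beta>\<close> symmetric in the \<open>li\<close>.\<close>

lemma polar_image_image:
  assumes x: "x \<in> vecs 3" and "qf 3 Q x = 0" "qf 3 Q (mat_mul_vec 3 M x) = 0"
  shows "polar 3 Q (mat_mul_vec 3 M x) (mat_mul_vec 3 M (mat_mul_vec 3 M x)) = 0"
  using assms(2,3) x mat_mul_vec_vecs[of 3 M x]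
  unfolding polar_coords[OF mat_mul_vec_vecs mat_mul_vec_vecs] qf_coords[OF x] qf_coords[OF mat_mul_vec_vecs]
    coords_image[OF mat_mul_vec_vecs] coords_image[OF x]
  by algebra

lemma conic_image_relation:
  assumes p: "p \<in> vecs 3" and u: "u \<in> vecs 3" and "qf 3 Q p = 0" "qf 3 Q (mat_mul_vec 3 M p) = 0"
    and Mu: "mat_mul_vec 3 M u = (\<lambda>i. d0 * p i + d1 * mat_mul_vec 3 M p i + d2 * u i)"
    and "l0 \<noteq> d2" "l1 \<noteq> d2" "l2 \<noteq> d2"
  shows "d2 * qf 3 Q u + d0 * polar 3 Q p u = 0"
proof -
  have "coord0 (mat_mul_vec 3 M u) = l0 * coord0 u" "coord1 (mat_mul_vec 3 M u) = l1 * coord1 u"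
    "coord2 (mat_mul_vec 3 M u) = l2 * coord2 u"
    by (simp_all add: coords_image[OF u])
  then have z: "l0 * coord0 u = d0 * coord0 p + d1 * (l0 * coord0 p) + d2 * coord0 u"
    "l1 * coord1 u = d0 * coord1 p + d1 * (l1 * coord1 p) + d2 * coord1 u"
    "l2 * coord2 u = d0 * coord2 p + d1 * (l2 * coord2 p) + d2 * coord2 u"
    unfolding Mu coords_lincomb3 coords_image[OF p] by simp_all
  have "(l0 - d2) * (l1 - d2) * (l2 - d2) * (d2 * qf 3 Q u + d0 * polar 3 Q p u) = 0"
    using assms(3,4) z
    unfolding polar_coords[OF p u] qf_coords[OF u] qf_coords[OF p] qf_coords[OF mat_mul_vec_vecs]
      coords_image[OF p]
    by algebra
  then show ?thesis using assms(6-8) by simp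
qed

end

section \<open>Field embeddings\<close>

abbreviation (input) map_vec :: "('a \<Rightarrow> 'b) \<Rightarrow> 'a vect \<Rightarrow> 'b vect" where
  "map_vec f x \<equiv> \<lambda>i. f (x i)"

abbreviation (input) map_mat :: "('a \<Rightarrow> 'b) \<Rightarrow> 'a matr \<Rightarrow> 'b matr" where
  "map_mat f M \<equiv> \<lambda>i j. f (M i j)"

locale field_hom =
  fixes \<phi> :: "'a::field \<Rightarrow> 'b::field"
  assumes hom_add: "\<phi> (x + y) = \<phi> x + \<phi> y"
    and hom_mult: "\<phi> (x * y) = \<phi> x * \<phi> y"
    and hom_one [simp]: "\<phi> 1 = 1"
begin

lemma hom_zero [simp]: "\<phi> 0 = 0"
  using hom_add[of 0 0] by (metis add_cancel_right_right add_0)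

lemma hom_uminus: "\<phi> (- x) = - \<phi> x"
  using hom_add[of x "- x"] by (simp add: eq_neg_iff_add_eq_0 add.commute)

lemma hom_diff: "\<phi> (x - y) = \<phi> x - \<phi> y"
  using hom_add[of x "- y"] by (simp add: hom_uminus)

lemma hom_sum: "\<phi> (sum f S) = (\<Sum>i\<in>S. \<phi> (f i))"
  by (induction S rule: infinite_finite_induct) (simp_all add: hom_add)

lemma hom_eq_0_iff [simp]: "\<phi> x = 0 \<longleftrightarrow> x = 0"
proof
  assume "\<phi> x = 0"
  show "x = 0"
  proof (rule ccontr)
    assume "x \<noteq> 0"
    then have "\<phi> x * \<phi> (inverse x) = 1" by (simp flip: hom_mult)
    with \<open>\<phi> x = 0\<close> show False by simp
  qed
qed simp

lemma hom_divide: "\<phi> (x / y) = \<phi> x / \<phi> y"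
proof (cases "y = 0")
  case False
  then have "\<phi> (x / y) * \<phi> y = \<phi> x" by (simp flip: hom_mult)
  then show ?thesis using False by (simp add: field_simps)
qed simp

lemma hom_vecs: "x \<in> vecs n \<Longrightarrow> map_vec \<phi> x \<in> vecs n"
  unfolding vecs_def by simp

lemma hom_mat_mul: "map_mat \<phi> (mat_mul n M P) = mat_mul n (map_mat \<phi> M) (map_mat \<phi> P)"
  by (simp add: mat_mul_def fun_eq_iff hom_sum hom_mult)

lemma hom_mat_pow: "map_mat \<phi> (mat_pow n M k) = mat_pow n (map_mat \<phi> M) k"
proof (induction k)
  case 0
  show ?case by (simp add: mat_pow_def mat_id_def fun_eq_iff)
next
  case (Suc k)
  then show ?case by (simp add: mat_pow_Suc hom_mat_mul)
qed

lemma hom_mat_mul_vec: "mat_mul_vec n (map_mat \<phi> M) (map_vec \<phi> x) = map_vec \<phi> (mat_mul_vec n M x)"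
  by (simp add: mat_mul_vec_def fun_eq_iff hom_sum hom_mult)

lemma hom_qf: "\<phi> (qf n c x) = qf n (map_mat \<phi> c) (map_vec \<phi> x)"
  by (simp add: qf_def hom_sum hom_mult)

lemma hom_polar: "\<phi> (polar n c x y) = polar n (map_mat \<phi> c) (map_vec \<phi> x) (map_vec \<phi> y)"
  by (simp add: polar_eq_sum hom_sum hom_mult hom_add)

lemma hom_pow_coeffs:
  "pow_coeffs (map_mat \<phi> M) k = (case pow_coeffs M k of (r0, r1, r2) \<Rightarrow> (\<phi> r0, \<phi> r1, \<phi> r2))"
  by (induction k)
    (auto simp: trace3_def minors3_def det3_def hom_add hom_mult hom_diff split: prod.splits)

end

lemma cubic_ext_field_hom: "cubic_ext \<phi> \<Longrightarrow> field_hom \<phi>"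
  by (simp add: cubic_ext_def field_hom_def)

lemma card_field_ge_2: "2 \<le> card (UNIV :: 'a::{finite,field} set)"
proof -
  have "card {0::'a, 1} \<le> CARD('a)" by (rule card_mono) auto
  then show ?thesis by simp
qed

lemma field_pow_card: "(y :: 'a::{finite,field}) ^ CARD('a) = y"
proof (cases "y = 0")
  case False
  let ?U = "UNIV - {0::'a}"
  have "bij_betw (\<lambda>z. y * z) ?U ?U"
    by (rule bij_betw_byWitness[where f'="\<lambda>z. z / y"]) (use False in auto)
  then have "(\<Prod>z\<in>?U. y * z) = (\<Prod>z\<in>?U. z)" by (rule prod.reindex_bij_betw)
  then have "y ^ card ?U * (\<Prod>z\<in>?U. z) = (\<Prod>z\<in>?U. z)" by (simp add: prod.distrib)
  moreover have "(\<Prod>z\<in>?U. z) \<noteq> 0" by (simp add: prod_zero_iff)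
  ultimately have "y ^ card ?U = 1" by simp
  moreover have "CARD('a) = Suc (card ?U)"
    using card_Diff_singleton[of 0 "UNIV :: 'a set"] finite_UNIV_card_ge_0[where 'a='a] by simp
  ultimately have "y ^ CARD('a) = y * y ^ card ?U" by (metis power_Suc)
  then show ?thesis using \<open>y ^ card ?U = 1\<close> by simp
next
  case True
  have "CARD('a) \<noteq> 0" by simp
  then show ?thesis using True by (simp add: power_0_left)
qed

section \<open>Singer cycles\<close>

locale singer =
  fixes A :: "'a::{finite,field} matr"
  assumes singer_cycle: "singer_cycle A"
begin

abbreviation act :: "nat \<Rightarrow> 'a vect \<Rightarrow> 'a vect" where
  "act k x \<equiv> mat_mul_vec 3 (mat_pow 3 A k) x"

lemma Suc_card_cube_minus_1: "Suc (CARD('a) ^ 3 - 1) = CARD('a) ^ 3"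
  using card_field_ge_2[where 'a='a] by (simp add: Suc_diff_1)

lemma act_add: "x \<in> vecs 3 \<Longrightarrow> act (a + b) x = act a (act b x)"
  by (rule mat_pow_add_apply)

lemma card_cube_minus_1_pos: "1 \<le> CARD('a) ^ 3 - 1"
proof -
  have "2 ^ 3 \<le> CARD('a) ^ 3" using card_field_ge_2[where 'a='a] by (rule power_mono) simp
  then show ?thesis by simp
qed

lemma act_mult_order: "x \<in> vecs 3 \<Longrightarrow> act ((CARD('a) ^ 3 - 1) * t) x = x"
proof (induction t)
  case (Suc t)
  have "act ((CARD('a) ^ 3 - 1) * Suc t) x = act (CARD('a) ^ 3 - 1) (act ((CARD('a) ^ 3 - 1) * t) x)"
    by (simp only: mult_Suc_right act_add[OF Suc.prems])
  then show ?case
    using Suc singer_cycle by (simp add: mat_mul_vec_mat_id singer_cycle_def)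
qed (simp add: mat_pow_def mat_mul_vec_mat_id)

lemma act_inj:
  assumes "x \<in> vecs 3" "y \<in> vecs 3" "act k x = act k y"
  shows "x = y"
proof -
  define n where "n = (CARD('a) ^ 3 - 1) * k - k"
  have "k \<le> (CARD('a) ^ 3 - 1) * k" using card_cube_minus_1_pos by simp
  then have "n + k = (CARD('a) ^ 3 - 1) * k" unfolding n_def by simp
  then have "z = act n (act k z)" if "z \<in> vecs 3" for z
    using act_mult_order[OF that, of k] act_add[OF that, of n k] by simp
  then show ?thesis using assms by metis
qed

lemma act_eq_zvec_iff: "x \<in> vecs 3 \<Longrightarrow> act k x = zvec \<longleftrightarrow> x = zvec"
  using act_inj[OF _ zvec_vecs, of x k] by (auto simp: mat_mul_vec_zvec)

lemma mat_pow_inj_on: "inj_on (mat_pow 3 A) {..<CARD('a) ^ 3 - 1}"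
proof (rule linorder_inj_onI', rule notI)
  fix i j
  assume ij: "i < j" "j \<in> {..<CARD('a) ^ 3 - 1}" and eq: "mat_pow 3 A i = mat_pow 3 A j"
  have "act (j - i) x = mat_mul_vec 3 (mat_id 3) x" if x: "x \<in> vecs 3" for x
  proof -
    have "act i (act (j - i) x) = act (i + (j - i)) x" by (rule act_add[symmetric, OF x])
    also have "\<dots> = act i x" using ij eq by simp
    finally have "act (j - i) x = x" by (rule act_inj[OF mat_mul_vec_vecs x])
    then show ?thesis using x by (simp only: mat_mul_vec_mat_id)
  qed
  then have "mat_pow 3 A (j - i) = mat_id 3"
    using mat_eqI[OF mat_supported_mat_pow mat_supported_mat_pow[of 3 A 0]] by (simp only: mat_pow_def funpow_0)
  moreover have "0 < j - i" "j - i < CARD('a) ^ 3 - 1" using ij by auto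
  ultimately show False using singer_cycle unfolding singer_cycle_def by blast
qed

lemma mat_pow_ne_zero: "mat_pow 3 A k \<noteq> (\<lambda>i j. 0)"
proof
  assume "mat_pow 3 A k = (\<lambda>i j. 0)"
  define e :: "'a vect" where "e = (\<lambda>i. if i = 0 then 1 else 0)"
  have "act k e = zvec" using \<open>mat_pow 3 A k = (\<lambda>i j. 0)\<close> by (simp add: mat_mul_vec_def zvec_def fun_eq_iff)
  moreover have "e \<in> vecs 3" "e \<noteq> zvec" unfolding e_def vecs_def zvec_def by (auto simp: fun_eq_iff)
  ultimately show False using act_eq_zvec_iff by blast
qed

lemma mat_poly2_zero: "mat_poly2 A (0, 0, 0) = (\<lambda>i j. 0)"
  by (simp add: mat_poly2_def)

text \<open>The map \<open>(r0, r1, r2) \<mapsto> r0 + r1 A + r2 A ^ 2\<close> hits the zero matrix and the \<open>q ^ 3 - 1\<close>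
  distinct powers of \<open>A\<close>, so by counting it is a bijection onto these matrices: \<open>GF(q)[A]\<close> is a field.\<close>

lemma mat_poly2_bij:
  "inj (mat_poly2 A) \<and> range (mat_poly2 A) = insert (\<lambda>i j. 0) (mat_pow 3 A ` {..<CARD('a) ^ 3 - 1})"
proof -
  let ?P = "mat_pow 3 A ` {..<CARD('a) ^ 3 - 1}"
  have "card ?P = CARD('a) ^ 3 - 1" using card_image[OF mat_pow_inj_on] by simp
  moreover have "(\<lambda>i j. 0) \<notin> ?P"
  proof
    assume "(\<lambda>i j. 0) \<in> ?P"
    then obtain k where "(\<lambda>i j. 0) = mat_pow 3 A k" by blast
    then show False using mat_pow_ne_zero[of k] by simp
  qed
  ultimately have card_P: "card (insert (\<lambda>i j. 0) ?P) = CARD('a) ^ 3"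
    using Suc_card_cube_minus_1 by simp
  have sub: "insert (\<lambda>i j. 0) ?P \<subseteq> range (mat_poly2 A)"
  proof -
    have "mat_pow 3 A k \<in> range (mat_poly2 A)" for k
      unfolding mat_pow_eq_mat_poly2[of A k] by (rule rangeI)
    moreover have "(\<lambda>i j. 0) \<in> range (mat_poly2 A)"
      unfolding mat_poly2_zero[symmetric] by (rule rangeI)
    ultimately show ?thesis by blast
  qed
  have "CARD('a \<times> 'a \<times> 'a) = CARD('a) * (CARD('a) * CARD('a))"
    by (metis UNIV_Times_UNIV card_cartesian_product)
  then have card_triples: "CARD('a \<times> 'a \<times> 'a) = CARD('a) ^ 3"
    by (simp add: power3_eq_cube)
  have fin: "finite (range (mat_poly2 A))" by simp
  have "card (range (mat_poly2 A)) \<le> CARD('a \<times> 'a \<times> 'a)"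
    by (rule card_image_le) simp
  moreover have "CARD('a) ^ 3 \<le> card (range (mat_poly2 A))"
    using card_mono[OF fin sub] card_P by simp
  ultimately have card_range: "card (range (mat_poly2 A)) = CARD('a \<times> 'a \<times> 'a)"
    using card_triples by simp
  have "inj (mat_poly2 A)" by (rule eq_card_imp_inj_on[OF finite card_range])
  moreover have "insert (\<lambda>i j. 0) ?P = range (mat_poly2 A)"
    by (rule card_subset_eq[OF fin sub]) (simp only: card_range card_triples card_P)
  ultimately show ?thesis by simp
qed

lemma mat_poly2_eq_pow:
  assumes "r \<noteq> (0, 0, 0)"
  shows "\<exists>m. mat_poly2 A r = mat_pow 3 A m"
proof -
  have "mat_poly2 A r \<noteq> (\<lambda>i j. 0)"
    using assms mat_poly2_bij mat_poly2_zero by (metis injD)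
  then show ?thesis using mat_poly2_bij by blast
qed

lemma pow_coeffs_card_cube: "pow_coeffs A (CARD('a) ^ 3) = (0, 1, 0)"
proof -
  have "mat_pow 3 A (CARD('a) ^ 3) = mat_pow 3 A 1"
  proof (rule mat_eqI[OF mat_supported_mat_pow mat_supported_mat_pow])
    fix x :: "'a vect" assume "x \<in> vecs 3"
    then show "act (CARD('a) ^ 3) x = act 1 x"
      using act_add[of x 1 "CARD('a) ^ 3 - 1"] act_mult_order[of x 1] Suc_card_cube_minus_1 by simp
  qed
  then have "mat_poly2 A (pow_coeffs A (CARD('a) ^ 3)) = mat_poly2 A (pow_coeffs A 1)"
    by (simp only: mat_pow_eq_mat_poly2)
  then show ?thesis using mat_poly2_bij by (simp add: inj_eq)
qed

lemma mat_poly2_scalar: "(\<lambda>i j. d * mat_id 3 i j) = mat_poly2 A (d, 0, 0)"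
  by (simp add: mat_poly2_def)

lemma not_scalar_mat_pow_1: "\<not> scalar_mat 3 (mat_pow 3 A 1)"
proof
  assume "scalar_mat 3 (mat_pow 3 A 1)"
  then obtain d where "mat_pow 3 A 1 = (\<lambda>i j. d * mat_id 3 i j)" by (auto simp: scalar_mat_def)
  then have "mat_poly2 A (pow_coeffs A 1) = mat_poly2 A (d, 0, 0)"
    by (simp only: mat_pow_eq_mat_poly2 mat_poly2_scalar)
  then show False using mat_poly2_bij by (simp add: inj_eq)
qed

lemma mat_pow_minus_scalar:
  assumes "\<not> scalar_mat 3 (mat_pow 3 A k)"
  shows "\<exists>m. (\<lambda>i j. mat_pow 3 A k i j - d * mat_id 3 i j) = mat_pow 3 A m"
proof -
  obtain r0 r1 r2 where r: "pow_coeffs A k = (r0, r1, r2)" by (cases "pow_coeffs A k")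
  have diff: "(\<lambda>i j. mat_pow 3 A k i j - d * mat_id 3 i j) = mat_poly2 A (r0 - d, r1, r2)"
    by (simp add: mat_pow_eq_mat_poly2[of A k] r mat_poly2_def fun_eq_iff algebra_simps)
  have "(r0 - d, r1, r2) \<noteq> (0, 0, 0)"
  proof
    assume "(r0 - d, r1, r2) = (0, 0, 0)"
    then have "mat_pow 3 A k = (\<lambda>i j. d * mat_id 3 i j)"
      by (simp add: mat_pow_eq_mat_poly2[of A k] r mat_poly2_def fun_eq_iff)
    then show False using assms by (auto simp: scalar_mat_def)
  qed
  then show ?thesis unfolding diff by (rule mat_poly2_eq_pow)
qed

lemma act_no_eigenvector:
  assumes "\<not> scalar_mat 3 (mat_pow 3 A k)" "x \<in> vecs 3" "act k x = (\<lambda>i. d * x i)"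
  shows "x = zvec"
proof -
  obtain m where m: "(\<lambda>i j. mat_pow 3 A k i j - d * mat_id 3 i j) = mat_pow 3 A m"
    using mat_pow_minus_scalar[OF assms(1)] by blast
  have "act m x = (\<lambda>i. act k x i - d * x i)"
    using assms(2) by (simp add: m[symmetric] mat_mul_vec_minus_scalar)
  then have "act m x = zvec" using assms(3) by (simp add: zvec_def)
  then show ?thesis using act_eq_zvec_iff[OF assms(2)] by blast
qed

end

locale singer_ext = singer A + field_hom \<phi>
  for A :: "'a::{finite,field} matr" and \<phi> :: "'a \<Rightarrow> 'b::{finite,field}" +
  assumes card_ext: "CARD('b) = CARD('a) ^ 3"
begin

text \<open>\<open>A ^ (q ^ 3) = A\<close> gives \<open>X ^ (q ^ 3) = X\<close> modulo the characteristic polynomial, and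
  \<open>X ^ (q ^ 3) - X\<close> vanishes on all of \<open>GF(q ^ 3)\<close>.\<close>

lemma charpoly3_roots: "3 \<le> card {y. poly (charpoly3 (map_mat \<phi> A)) y = 0}"
proof -
  let ?Q = "CARD('a) ^ 3" and ?\<chi> = "charpoly3 (map_mat \<phi> A)"
  have "pow_coeffs (map_mat \<phi> A) ?Q = (0, 1, 0)"
    by (simp add: hom_pow_coeffs pow_coeffs_card_cube)
  then obtain s where s: "monom 1 ?Q = ?\<chi> * s + [:0, 1:]"
    using monom_pow_coeffs by fastforce
  have roots: "poly ?\<chi> y * poly s y = 0" for y
    using arg_cong[OF s, of "\<lambda>p. poly p y"] field_pow_card[of y] card_ext by (simp add: poly_monom)
  have "?\<chi> \<noteq> 0" "degree ?\<chi> = 3" by (simp_all add: charpoly3_def eval_nat_numeral)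
  moreover have "s \<noteq> 0"
  proof
    assume "s = 0"
    then have "degree (monom (1::'b) ?Q) = 1" using s by simp
    moreover have "2 ^ 3 \<le> ?Q" using card_field_ge_2[where 'a='a] by (rule power_mono) simp
    ultimately show False by (simp add: degree_monom_eq)
  qed
  ultimately have "degree (?\<chi> * s + [:0, 1:]) = 3 + degree s"
    by (simp add: degree_mult_eq degree_add_eq_left)
  then have deg_s: "?Q = 3 + degree s" using s by (metis degree_monom_eq one_neq_zero)
  have "UNIV = {y. poly ?\<chi> y = 0} \<union> {y. poly s y = 0}" using roots by auto
  then have "?Q \<le> card {y. poly ?\<chi> y = 0} + card {y. poly s y = 0}"
    using card_Un_le[of "{y. poly ?\<chi> y = 0}" "{y. poly s y = 0}"] card_ext by simp
  moreover have "card {y. poly s y = 0} \<le> degree s" using \<open>s \<noteq> 0\<close> by (rule card_poly_roots_bound)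
  ultimately show ?thesis using deg_s by simp
qed

lemma three_eigenvectors:
  obtains w0 w1 w2 o0 o1 o2 where "eigenvector 3 (map_mat \<phi> A) w0 o0"
    "eigenvector 3 (map_mat \<phi> A) w1 o1" "eigenvector 3 (map_mat \<phi> A) w2 o2"
    "o0 \<noteq> o1" "o0 \<noteq> o2" "o1 \<noteq> o2"
proof -
  obtain o0 o1 o2 where "poly (charpoly3 (map_mat \<phi> A)) o0 = 0" "poly (charpoly3 (map_mat \<phi> A)) o1 = 0"
    "poly (charpoly3 (map_mat \<phi> A)) o2 = 0" "o0 \<noteq> o1" "o0 \<noteq> o2" "o1 \<noteq> o2"
    using charpoly3_roots by (auto simp: card_le_Suc_iff numeral_eq_Suc)
  then show ?thesis using that charpoly3_root_eigenvector by metis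
qed

lemma eigenvalue_ne_0:
  assumes "eigenvector 3 (map_mat \<phi> A) w l"
  shows "l \<noteq> 0"
proof
  assume "l = 0"
  define n where "n = CARD('a) ^ 3 - 1"
  have "mat_pow 3 (map_mat \<phi> A) n = mat_id 3"
    using singer_cycle by (simp add: n_def hom_mat_pow[symmetric] singer_cycle_def mat_id_def fun_eq_iff)
  then have "w = (\<lambda>i. l ^ n * w i)"
    using eigenvector_mat_pow[OF assms, of n] assms by (simp add: eigenvector_def mat_mul_vec_mat_id)
  moreover have "n \<noteq> 0" using card_cube_minus_1_pos by (simp add: n_def)
  ultimately have "w = zvec" using \<open>l = 0\<close> by (simp add: zvec_def power_0_left)
  then show False using assms by (simp add: eigenvector_def)
qed

lemma eigenvalue_pow_ne_hom:
  assumes "\<not> scalar_mat 3 (mat_pow 3 A k)" and eig: "eigenvector 3 (map_mat \<phi> A) w l"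
  shows "l ^ k \<noteq> \<phi> d"
proof
  assume "l ^ k = \<phi> d"
  obtain m where m: "(\<lambda>i j. mat_pow 3 A k i j - d * mat_id 3 i j) = mat_pow 3 A m"
    using mat_pow_minus_scalar[OF assms(1)] by blast
  have "mat_pow 3 (map_mat \<phi> A) m = (\<lambda>i j. mat_pow 3 (map_mat \<phi> A) k i j - \<phi> d * mat_id 3 i j)"
    by (simp add: m[symmetric] hom_diff hom_mult hom_mat_pow[symmetric] mat_id_def fun_eq_iff)
  then have "(\<lambda>i. l ^ m * w i) = (\<lambda>i. l ^ k * w i - \<phi> d * w i)"
    using eig eigenvector_mat_pow[OF eig, of m] eigenvector_mat_pow[OF eig, of k]
    by (simp add: mat_mul_vec_minus_scalar eigenvector_def)
  then have "w = zvec"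
    using \<open>l ^ k = \<phi> d\<close> eigenvalue_ne_0[OF eig] by (simp add: fun_eq_iff zvec_def)
  then show False using eig by (simp add: eigenvector_def)
qed

lemma eigenvector_delta_vertex:
  assumes eig: "eigenvector 3 (map_mat \<phi> A) w l"
  shows "w \<in> delta_vertices \<phi> A"
proof -
  have "\<not> (\<exists>v\<in>vecs 3. \<exists>t. w = (\<lambda>i. t * \<phi> (v i)))"
  proof
    assume "\<exists>v\<in>vecs 3. \<exists>t. w = (\<lambda>i. t * \<phi> (v i))"
    then obtain v t where v: "v \<in> vecs 3" and w: "w = (\<lambda>i. t * \<phi> (v i))" by blast
    have "t \<noteq> 0" "v \<noteq> zvec" using eig by (auto simp: eigenvector_def w zvec_def)
    then obtain j where j: "v j \<noteq> 0" by (auto simp: zvec_def)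
    have "(\<lambda>i. t * \<phi> (mat_mul_vec 3 A v i)) = (\<lambda>i. l * (t * \<phi> (v i)))"
      using eig by (simp add: eigenvector_def w mat_mul_vec_scale hom_mat_mul_vec)
    then have "\<phi> (mat_mul_vec 3 A v j) = l * \<phi> (v j)"
      using \<open>t \<noteq> 0\<close> by (simp add: fun_eq_iff)
    then have "l ^ 1 = \<phi> (mat_mul_vec 3 A v j / v j)" using j by (simp add: hom_divide)
    then show False using eigenvalue_pow_ne_hom[OF not_scalar_mat_pow_1 eig] by blast
  qed
  then show ?thesis using eig unfolding eigenvector_def delta_vertices_def by blast
qed

lemma bundle_eigenbasis:
  assumes "in_bundle \<phi> A c"
  obtains w0 w1 w2 o0 o1 o2 where
    "eigenvector 3 (map_mat \<phi> A) w0 o0" "eigenvector 3 (map_mat \<phi> A) w1 o1"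
    "eigenvector 3 (map_mat \<phi> A) w2 o2"
    "\<And>k. eigenbasis_conic (map_mat \<phi> (mat_pow 3 A k)) (map_mat \<phi> c) w0 w1 w2 (o0 ^ k) (o1 ^ k) (o2 ^ k)"
proof -
  obtain w0 w1 w2 o0 o1 o2 where eig: "eigenvector 3 (map_mat \<phi> A) w0 o0"
    "eigenvector 3 (map_mat \<phi> A) w1 o1" "eigenvector 3 (map_mat \<phi> A) w2 o2"
    and distinct: "o0 \<noteq> o1" "o0 \<noteq> o2" "o1 \<noteq> o2"
    by (rule three_eigenvectors)
  have "eigenbasis_conic (map_mat \<phi> (mat_pow 3 A k)) (map_mat \<phi> c) w0 w1 w2 (o0 ^ k) (o1 ^ k) (o2 ^ k)" for k
  proof
    show "w0 \<in> vecs 3" "w1 \<in> vecs 3" "w2 \<in> vecs 3" using eig by (simp_all add: eigenvector_def)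
    show "det3 w0 w1 w2 \<noteq> 0" by (rule eigenvectors_det3_ne_0[OF eig distinct])
    show "mat_mul_vec 3 (map_mat \<phi> (mat_pow 3 A k)) w0 = (\<lambda>i. o0 ^ k * w0 i)"
      "mat_mul_vec 3 (map_mat \<phi> (mat_pow 3 A k)) w1 = (\<lambda>i. o1 ^ k * w1 i)"
      "mat_mul_vec 3 (map_mat \<phi> (mat_pow 3 A k)) w2 = (\<lambda>i. o2 ^ k * w2 i)"
      using eig by (simp_all add: hom_mat_pow eigenvector_mat_pow)
    show "qf 3 (map_mat \<phi> c) w0 = 0" "qf 3 (map_mat \<phi> c) w1 = 0" "qf 3 (map_mat \<phi> c) w2 = 0"
      using assms eigenvector_delta_vertex[OF eig(1)] eigenvector_delta_vertex[OF eig(2)]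
        eigenvector_delta_vertex[OF eig(3)]
      by (simp_all add: in_bundle_def)
  qed
  then show ?thesis using that eig by blast
qed

lemma bundle_polar_image_image:
  assumes "in_bundle \<phi> A c" and x: "x \<in> vecs 3" and "qf 3 c x = 0" "qf 3 c (act k x) = 0"
  shows "polar 3 c (act k x) (act k (act k x)) = 0"
proof -
  obtain w0 w1 w2 o0 o1 o2 where
    "eigenbasis_conic (map_mat \<phi> (mat_pow 3 A k)) (map_mat \<phi> c) w0 w1 w2 (o0 ^ k) (o1 ^ k) (o2 ^ k)"
    using bundle_eigenbasis[OF assms(1)] by metis
  then interpret eigenbasis_conic "map_mat \<phi> (mat_pow 3 A k)" "map_mat \<phi> c" w0 w1 w2 "o0 ^ k" "o1 ^ k" "o2 ^ k" .
  have "qf 3 (map_mat \<phi> c) (map_vec \<phi> x) = 0"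
    "qf 3 (map_mat \<phi> c) (mat_mul_vec 3 (map_mat \<phi> (mat_pow 3 A k)) (map_vec \<phi> x)) = 0"
    using assms(3,4) by (simp_all add: hom_mat_mul_vec flip: hom_qf)
  from polar_image_image[OF hom_vecs[OF x] this] show ?thesis
    by (simp add: hom_mat_mul_vec flip: hom_polar)
qed

lemma bundle_image_relation:
  assumes "in_bundle \<phi> A c" and nonscalar: "\<not> scalar_mat 3 (mat_pow 3 A k)"
    and p: "p \<in> vecs 3" and u: "u \<in> vecs 3" and "qf 3 c p = 0" "qf 3 c (act k p) = 0"
    and u_image: "act k u = (\<lambda>i. d0 * p i + d1 * act k p i + d2 * u i)"
  shows "d2 * qf 3 c u + d0 * polar 3 c p u = 0"
proof -
  obtain w0 w1 w2 o0 o1 o2 where eig: "eigenvector 3 (map_mat \<phi> A) w0 o0"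
    "eigenvector 3 (map_mat \<phi> A) w1 o1" "eigenvector 3 (map_mat \<phi> A) w2 o2"
    and "eigenbasis_conic (map_mat \<phi> (mat_pow 3 A k)) (map_mat \<phi> c) w0 w1 w2 (o0 ^ k) (o1 ^ k) (o2 ^ k)"
    using bundle_eigenbasis[OF assms(1)] by metis
  then interpret eigenbasis_conic "map_mat \<phi> (mat_pow 3 A k)" "map_mat \<phi> c" w0 w1 w2 "o0 ^ k" "o1 ^ k" "o2 ^ k"
    by simp
  have "qf 3 (map_mat \<phi> c) (map_vec \<phi> p) = 0"
    "qf 3 (map_mat \<phi> c) (mat_mul_vec 3 (map_mat \<phi> (mat_pow 3 A k)) (map_vec \<phi> p)) = 0"
    using assms(5,6) by (simp_all add: hom_mat_mul_vec flip: hom_qf)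
  moreover have "mat_mul_vec 3 (map_mat \<phi> (mat_pow 3 A k)) (map_vec \<phi> u) = (\<lambda>i. \<phi> d0 * \<phi> (p i)
      + \<phi> d1 * mat_mul_vec 3 (map_mat \<phi> (mat_pow 3 A k)) (map_vec \<phi> p) i + \<phi> d2 * \<phi> (u i))"
    by (simp add: hom_mat_mul_vec u_image hom_add hom_mult)
  moreover have "o0 ^ k \<noteq> \<phi> d2" "o1 ^ k \<noteq> \<phi> d2" "o2 ^ k \<noteq> \<phi> d2"
    using eigenvalue_pow_ne_hom[OF nonscalar] eig by blast+
  ultimately have "\<phi> d2 * qf 3 (map_mat \<phi> c) (map_vec \<phi> u)
      + \<phi> d0 * polar 3 (map_mat \<phi> c) (map_vec \<phi> p) (map_vec \<phi> u) = 0"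
    by (rule conic_image_relation[OF hom_vecs[OF p] hom_vecs[OF u]])
  then show ?thesis by (simp flip: hom_qf hom_polar hom_mult hom_add)
qed

end

section \<open>Lines on the quadric\<close>

definition vec4 :: "('a::zero) vect \<Rightarrow> 'a \<Rightarrow> 'a vect" where
  "vec4 x t = x(3 := t)"

definition qf_cross :: "('a::comm_ring_1) matr \<Rightarrow> 'a vect \<Rightarrow> 'a" where
  "qf_cross c x = (\<Sum>i<3. c i 3 * x i)"

lemma vec4_apply [simp]: "vec4 x t 3 = t" "i \<noteq> 3 \<Longrightarrow> vec4 x t i = x i"
  by (simp_all add: vec4_def)

lemma vec4_lincomb:
  "(\<lambda>i. a * vec4 x s i + b * vec4 y t i) = vec4 (\<lambda>i. a * x i + b * y i) (a * s + b * (t::'a::semiring_0))"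
  by (simp add: vec4_def fun_eq_iff)

lemma vec4_lincomb3:
  "(\<lambda>i. a * vec4 x r i + b * vec4 y s i + d * vec4 z t i)
     = vec4 (\<lambda>i. a * x i + b * y i + d * z i) (a * r + b * s + d * (t::'a::semiring_0))"
  by (simp add: vec4_def fun_eq_iff)

lemma vec4_eq_zvec_iff: "x \<in> vecs 3 \<Longrightarrow> vec4 x t = zvec \<longleftrightarrow> x = zvec \<and> t = 0"
  by (auto simp: vec4_def fun_eq_iff vecs_def zvec_def)

lemma vecs4_obtain_vec4:
  assumes "y \<in> vecs 4"
  obtains x where "x \<in> vecs 3" "y = vec4 x (y 3)"
  using assms by (intro that[of "y(3 := 0)"]) (auto simp: vecs_def vec4_def)

lemma qf_vec4: "qf 4 c (vec4 x t) = qf 3 c x + t * qf_cross c x + t^2 * c 3 3"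
  using qf_extend[of 3 c x t] by (simp add: vec4_def qf_cross_def numeral_eq_Suc)

lemma qf_cross_lincomb:
  "qf_cross c (\<lambda>i. a * x i + b * y i + d * z i) = a * qf_cross c x + b * qf_cross c y + d * qf_cross c z"
  by (simp add: qf_cross_def sum.distrib sum_distrib_left algebra_simps)

lemma mat_mul_vec_blk:
  assumes "x \<in> vecs 3"
  shows "mat_mul_vec 4 (blk B) (vec4 x t) = vec4 (mat_mul_vec 3 B x) (t::'a::comm_ring_1)"
proof
  fix i
  have "x 3 = 0" using assms unfolding vecs_def by simp
  then show "mat_mul_vec 4 (blk B) (vec4 x t) i = vec4 (mat_mul_vec 3 B x) t i"
    by (simp add: mat_mul_vec_def blk_def vec4_def eval_nat_numeral)
qed

lemma qf_pointT: "qf 4 c pointT = (c 3 3 :: 'a::comm_ring_1)"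
  using qf_vec4[of c zvec 1] by (simp add: qf_def qf_cross_def zvec_def vec4_def pointT_def fun_upd_def)

lemma indep2_vec4:
  assumes "p \<in> vecs 3" "p \<noteq> zvec" "t \<noteq> 0"
  shows "indep2 (vec4 p 0) (vec4 u t)"
proof (rule indep2I)
  show "vec4 p 0 \<noteq> zvec" using assms by (simp add: vec4_eq_zvec_iff)
  show "vec4 u t \<noteq> (\<lambda>i. s * vec4 p 0 i)" for s
  proof
    assume "vec4 u t = (\<lambda>i. s * vec4 p 0 i)"
    then have "vec4 u t 3 = s * vec4 p 0 3" by (rule fun_cong)
    then show False using assms(3) by simp
  qed
qed

lemma span2_iff: "x \<in> span2 g h \<longleftrightarrow> (\<exists>a b. x = (\<lambda>i. a * g i + b * h i))"
  by (auto simp: span2_def)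

lemma span2_lincomb:
  assumes "x \<in> span2 g h" "y \<in> span2 g h"
  shows "(\<lambda>i. s * x i + t * y i) \<in> span2 g (h :: ('a::comm_ring_1) vect)"
proof -
  obtain a b a' b' where "x = (\<lambda>i. a * g i + b * h i)" "y = (\<lambda>i. a' * g i + b' * h i)"
    using assms by (auto simp: span2_iff)
  then have "(\<lambda>i. s * x i + t * y i) = (\<lambda>i. (s * a + t * a') * g i + (s * b + t * b') * h i)"
    by (simp add: fun_eq_iff algebra_simps)
  then show ?thesis by (auto simp: span2_iff)
qed

lemma span2_eq:
  fixes g h x y :: "('a::field) vect"
  assumes x: "x \<in> span2 g h" and y: "y \<in> span2 g h" and ind: "indep2 x y"
  shows "span2 g h = span2 x y"
proof
  show "span2 x y \<subseteq> span2 g h" using span2_lincomb[OF x y] by (auto simp: span2_iff)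
  obtain a1 b1 a2 b2 where xe: "x = (\<lambda>i. a1 * g i + b1 * h i)" and ye: "y = (\<lambda>i. a2 * g i + b2 * h i)"
    using x y by (auto simp: span2_iff)
  define D where "D = a1 * b2 - a2 * b1"
  have "D \<noteq> 0"
  proof
    assume "D = 0"
    then have "(\<lambda>i. b2 * x i + (- b1) * y i) = zvec" "(\<lambda>i. a2 * x i + (- a1) * y i) = zvec"
      unfolding xe ye zvec_def D_def by (simp_all add: fun_eq_iff algebra_simps)
    then have "b1 = 0" "b2 = 0" "a1 = 0" "a2 = 0" using ind unfolding indep2_def by fastforce+
    then have "(\<lambda>i. 1 * x i + 0 * y i) = zvec" unfolding xe by (simp add: zvec_def)
    then have "(1::'a) = 0" using ind unfolding indep2_def by blast
    then show False by simp
  qed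
  have "D * g i = b2 * x i - b1 * y i" "D * h i = a1 * y i - a2 * x i" for i
    unfolding xe ye D_def by (simp_all add: algebra_simps)
  then have "g = (\<lambda>i. (b2 / D) * x i + (- b1 / D) * y i)" "h = (\<lambda>i. (- a2 / D) * x i + (a1 / D) * y i)"
    using \<open>D \<noteq> 0\<close> by (simp_all add: fun_eq_iff field_simps)
  then have "g \<in> span2 x y" "h \<in> span2 x y" by (metis span2_iff)+
  then show "span2 g h \<subseteq> span2 x y" using span2_lincomb by (auto simp: span2_iff[of _ g h])
qed

lemma lines4E:
  assumes "L \<in> lines4"
  obtains g h where "L = span2 g h" "g \<in> vecs 4" "h \<in> vecs 4" "indep2 g h"
  using assms unfolding lines4_def indep2_def by blast

lemma lines4_lincomb: "L \<in> lines4 \<Longrightarrow> x \<in> L \<Longrightarrow> y \<in> L \<Longrightarrow> (\<lambda>i. a * x i + b * y i) \<in> L"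
  by (erule lines4E) (simp add: span2_lincomb)

lemma lines4_vecs: "L \<in> lines4 \<Longrightarrow> x \<in> L \<Longrightarrow> x \<in> vecs 4"
  by (erule lines4E) (auto simp: span2_iff intro: vecs_lincomb)

lemma lines4_eqI:
  assumes "L1 \<in> lines4" "L2 \<in> lines4" "x \<in> L1" "y \<in> L1" "x \<in> L2" "y \<in> L2" "indep2 x y"
  shows "L1 = L2"
proof -
  obtain g h g' h' where "L1 = span2 g h" "L2 = span2 g' h'"
    using assms(1,2) by (metis lines4E)
  then show ?thesis using assms(3-7) span2_eq by metis
qed

lemma line_on_polar:
  assumes "line_on c L" "x \<in> L" "y \<in> L"
  shows "polar 4 c x y = 0"
  using assms lines4_lincomb[of L x y 1 1] unfolding line_on_def polar_def by simp

lemma line_on_not_in_pi: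
  fixes c :: "('a::field) matr"
  assumes nd: "nondeg 3 c" and L: "line_on c L"
  obtains x y where "x \<in> L" "y \<in> L" "indep2 x y" "y 3 \<noteq> 0"
proof -
  have L4: "L \<in> lines4" and on: "\<And>v. v \<in> L \<Longrightarrow> qf 4 c v = 0" using L by (auto simp: line_on_def)
  obtain g h where Lgh: "L = span2 g h" and gh: "g \<in> vecs 4" "h \<in> vecs 4" and ind: "indep2 g h"
    using L4 by (rule lines4E)
  have gh_L: "g \<in> L" "h \<in> L" unfolding Lgh span2_iff by (metis add.right_neutral mult_1 mult_zero_left add_0)+
  show ?thesis
  proof (cases "h 3 = 0")
    case True
    have "g 3 \<noteq> 0"
    proof
      assume "g 3 = 0"
      obtain g' h' where g': "g' \<in> vecs 3" "g = vec4 g' 0" and h': "h' \<in> vecs 3" "h = vec4 h' 0"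
        using gh \<open>g 3 = 0\<close> True by (metis vecs4_obtain_vec4)
      have "qf 3 c (\<lambda>i. a * g' i + b * h' i) = 0" for a b
        using on[OF lines4_lincomb[OF L4 gh_L, of a b]] by (simp add: g' h' vec4_lincomb qf_vec4)
      moreover have "indep2 g' h'"
        unfolding indep2_def
      proof (intro allI impI)
        fix a b assume "(\<lambda>i. a * g' i + b * h' i) = zvec"
        then have "(\<lambda>i. a * g i + b * h i) = zvec"
          by (auto simp: g' h' vec4_lincomb vec4_def zvec_def fun_eq_iff)
        then show "a = 0 \<and> b = 0" using ind by (simp add: indep2_def)
      qed
      ultimately show False using nondeg_conic_contains_no_line[OF nd g'(1) h'(1)] by blast
    qed
    then show ?thesis using that[of h g] gh_L indep2_commute[OF ind] by blast
  qed (use that gh_L ind in blast)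
qed

lemma line_on_points:
  fixes c :: "('a::field) matr"
  assumes nd: "nondeg 3 c" and L: "line_on c L"
  obtains p u where "p \<in> vecs 3" "p \<noteq> zvec" "u \<in> vecs 3" "vec4 p 0 \<in> L" "vec4 u 1 \<in> L"
proof -
  have L4: "L \<in> lines4" using L by (simp add: line_on_def)
  obtain x y where xy: "x \<in> L" "y \<in> L" "indep2 x y" "y 3 \<noteq> 0"
    using line_on_not_in_pi[OF nd L] by blast
  define p' where "p' = (\<lambda>i. 1 * x i + (- (x 3 / y 3)) * y i)"
  define u' where "u' = (\<lambda>i. 0 * x i + (1 / y 3) * y i)"
  have "p' \<in> L" "u' \<in> L" unfolding p'_def u'_def using lines4_lincomb[OF L4 xy(1,2)] by blast+
  moreover have "p' 3 = 0" "u' 3 = 1" using xy(4) unfolding p'_def u'_def by simp_all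
  moreover have "p' \<noteq> zvec"
  proof
    assume "p' = zvec"
    then have "(1::'a) = 0" using xy(3) unfolding indep2_def p'_def by blast
    then show False by simp
  qed
  moreover obtain p u where "p \<in> vecs 3" "p' = vec4 p (p' 3)" "u \<in> vecs 3" "u' = vec4 u (u' 3)"
    using lines4_vecs[OF L4] calculation(1,2) by (metis vecs4_obtain_vec4)
  ultimately show ?thesis using that[of p u] by (auto simp: vec4_eq_zvec_iff)
qed

text \<open>The conditions for the line spanned by \<open>(p, 0)\<close> and \<open>(u, 1)\<close> to lie on the quadric.\<close>

definition on_quadric_line :: "('a::comm_ring_1) matr \<Rightarrow> 'a vect \<Rightarrow> 'a vect \<Rightarrow> bool" where
  "on_quadric_line c p u \<longleftrightarrow> qf 3 c p = 0 \<and> polar 3 c p u + qf_cross c p = 0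
     \<and> qf 3 c u + qf_cross c u + c 3 3 = 0"

lemma line_on_on_quadric_line:
  assumes "line_on c L" "vec4 p 0 \<in> L" "vec4 u 1 \<in> L"
  shows "on_quadric_line c p u"
proof -
  have "vec4 (\<lambda>i. 1 * p i + 1 * u i) (1 * 0 + 1 * 1) \<in> L"
    using lines4_lincomb[of L "vec4 p 0" "vec4 u 1" 1 1, unfolded vec4_lincomb] assms
    by (simp add: line_on_def)
  then have "qf 4 c (vec4 p 0) = 0" "qf 4 c (vec4 u 1) = 0" "qf 4 c (vec4 (\<lambda>i. 1 * p i + 1 * u i) 1) = 0"
    using assms by (auto simp: line_on_def)
  then have "qf 3 c p = 0" "qf 3 c u + qf_cross c u + c 3 3 = 0"
    "qf 3 c (\<lambda>i. 1 * p i + 1 * u i) + qf_cross c p + qf_cross c u + c 3 3 = 0"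
    using qf_cross_lincomb[of c 1 p 1 u 0 u] by (simp_all add: qf_vec4 add.assoc)
  moreover have "polar 3 c p u = qf 3 c (\<lambda>i. 1 * p i + 1 * u i) - qf 3 c p - qf 3 c u"
    by (simp add: polar_def)
  ultimately show ?thesis unfolding on_quadric_line_def by (simp add: algebra_simps, algebra)
qed

context singer_ext
begin

lemma image_affine_point_not_coplanar:
  assumes conic: "in_bundle \<phi> A c" and T: "c 3 3 \<noteq> 0" and nonscalar: "\<not> scalar_mat 3 (mat_pow 3 A k)"
    and p: "p \<in> vecs 3" "p \<noteq> zvec" and u: "u \<in> vecs 3"
    and E1: "on_quadric_line c p u" and E2: "on_quadric_line c (act k p) (act k u)"
  shows "det3 p (act k p) u \<noteq> 0"
proof
  assume "det3 p (act k p) u = 0"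
  moreover have "indep2 p (act k p)"
    using act_no_eigenvector[OF nonscalar p(1)] p(2) by (intro indep2I) auto
  ultimately obtain e0 e1 where u_eq: "u = (\<lambda>i. e0 * p i + e1 * act k p i)"
    using det3_eq_0_span[OF _ p(1) mat_mul_vec_vecs u] by blast
  have qp: "qf 3 c p = 0" "qf 3 c (act k p) = 0"
    using E1 E2 by (simp_all add: on_quadric_line_def)
  have "polar 3 c (act k p) (act k (act k p)) = 0"
    using bundle_polar_image_image[OF conic p(1) qp] .
  moreover have "act k u = (\<lambda>i. e0 * act k p i + e1 * act k (act k p) i)"
    unfolding u_eq by (rule mat_mul_vec_lincomb)
  ultimately have "qf_cross c (act k p) = 0"
    using E2 qp by (simp add: on_quadric_line_def polar_lincomb_right polar_self)
  moreover have "e1 * polar 3 c p (act k p) + qf_cross c p = 0"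
    "e0 * e1 * polar 3 c p (act k p) + e0 * qf_cross c p + e1 * qf_cross c (act k p) + c 3 3 = 0"
    using E1 qp qf_cross_lincomb[of c e0 p e1 "act k p" 0 p] unfolding u_eq
    by (simp_all add: on_quadric_line_def qf_lincomb polar_lincomb_right polar_self add.assoc)
  ultimately have "c 3 3 = 0" by algebra
  then show False using T by simp
qed

lemma image_of_affine_point:
  assumes conic: "in_bundle \<phi> A c" and T: "c 3 3 \<noteq> 0" and nonscalar: "\<not> scalar_mat 3 (mat_pow 3 A k)"
    and p: "p \<in> vecs 3" "p \<noteq> zvec" and u: "u \<in> vecs 3"
    and E1: "on_quadric_line c p u" and E2: "on_quadric_line c (act k p) (act k u)"
  shows "\<exists>d0 d1. act k u = (\<lambda>i. d0 * p i + d1 * act k p i + u i)"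
proof -
  define D where "D = det3 p (act k p) u"
  define d0 d1 d2 where "d0 = det3 (act k u) (act k p) u / D"
    and "d1 = det3 p (act k u) u / D" and "d2 = det3 p (act k p) (act k u) / D"
  have u_image: "act k u = (\<lambda>i. d0 * p i + d1 * act k p i + d2 * u i)"
    unfolding d0_def d1_def d2_def D_def
    using image_affine_point_not_coplanar[OF assms]
    by (rule cramer3[OF _ mat_mul_vec_vecs p(1) mat_mul_vec_vecs u])
  have E1: "qf 3 c p = 0" "polar 3 c p u + qf_cross c p = 0" "qf 3 c u + qf_cross c u + c 3 3 = 0"
    using E1 by (simp_all add: on_quadric_line_def)
  have E2: "qf 3 c (act k p) = 0" "polar 3 c (act k p) (act k u) + qf_cross c (act k p) = 0"
    "qf 3 c (act k u) + qf_cross c (act k u) + c 3 3 = 0"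
    using E2 by (simp_all add: on_quadric_line_def)
  have "d2 * qf 3 c u + d0 * polar 3 c p u = 0"
    by (rule bundle_image_relation[OF conic nonscalar p(1) u E1(1) E2(1) u_image])
  moreover have "d0 * polar 3 c p (act k p) + d2 * polar 3 c (act k p) u + qf_cross c (act k p) = 0"
    "d2\<^sup>2 * qf 3 c u + d0 * d1 * polar 3 c p (act k p) + d0 * d2 * polar 3 c p u
      + d1 * d2 * polar 3 c (act k p) u + d0 * qf_cross c p + d1 * qf_cross c (act k p)
      + d2 * qf_cross c u + c 3 3 = 0"
    using E2(2,3)[unfolded u_image qf_lincomb3 qf_cross_lincomb polar_lincomb3_right] E1(1) E2(1)
    by (simp_all add: polar_self polar_commute[of 3 c "act k p" p] algebra_simps)
  ultimately have "c 3 3 * (1 - d2) = 0" using E1 by algebra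
  then show ?thesis using T u_image by auto
qed

lemma line_meets_image:
  assumes conic: "in_bundle \<phi> A c" and nd: "nondeg 3 c" and T: "c 3 3 \<noteq> 0"
    and L: "line_on c L" and GL: "line_on c (mat_mul_vec 4 (blk (mat_pow 3 A k)) ` L)"
  shows "\<exists>X. X \<noteq> zvec \<and> X \<in> L \<and> X \<in> mat_mul_vec 4 (blk (mat_pow 3 A k)) ` L"
proof -
  let ?GL = "mat_mul_vec 4 (blk (mat_pow 3 A k)) ` L"
  have L4: "L \<in> lines4" and GL4: "?GL \<in> lines4" using L GL by (simp_all add: line_on_def)
  obtain p u where p: "p \<in> vecs 3" "p \<noteq> zvec" and u: "u \<in> vecs 3"
    and P: "vec4 p 0 \<in> L" and U: "vec4 u 1 \<in> L"
    using line_on_points[OF nd L] by blast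
  have GP: "vec4 (act k p) 0 \<in> ?GL" and GU: "vec4 (act k u) 1 \<in> ?GL"
    using imageI[OF P, of "mat_mul_vec 4 (blk (mat_pow 3 A k))"] imageI[OF U, of "mat_mul_vec 4 (blk (mat_pow 3 A k))"]
    by (simp_all add: mat_mul_vec_blk p(1) u)
  show ?thesis
  proof (cases "scalar_mat 3 (mat_pow 3 A k)")
    case True
    then obtain d where "act k p = (\<lambda>i. d * p i)"
      using p(1) by (auto simp: scalar_mat_def mat_mul_vec_scalar_mat)
    then have "vec4 (act k p) 0 = (\<lambda>i. d * vec4 p 0 i + 0 * vec4 u 1 i)"
      unfolding vec4_lincomb by simp
    then have "vec4 (act k p) 0 \<in> L" using lines4_lincomb[OF L4 P U, of d 0] by simp
    moreover have "vec4 (act k p) 0 \<noteq> zvec"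
      using p act_eq_zvec_iff[OF p(1)] by (simp add: vec4_eq_zvec_iff mat_mul_vec_vecs)
    ultimately show ?thesis using GP by blast
  next
    case False
    obtain d0 d1 where u_image: "act k u = (\<lambda>i. d0 * p i + d1 * act k p i + u i)"
      using image_of_affine_point[OF conic T False p u line_on_on_quadric_line[OF L P U]
          line_on_on_quadric_line[OF GL GP GU]] by blast
    have "vec4 (\<lambda>i. d0 * p i + 1 * u i) (d0 * 0 + 1 * 1) \<in> L"
      using lines4_lincomb[OF L4 P U, of d0 1] by (simp only: vec4_lincomb)
    moreover have "vec4 (\<lambda>i. (- d1) * act k p i + 1 * act k u i) ((- d1) * 0 + 1 * 1) \<in> ?GL"
      using lines4_lincomb[OF GL4 GP GU, of "- d1" 1] by (simp only: vec4_lincomb)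
    moreover have "(\<lambda>i. (- d1) * act k p i + 1 * act k u i) = (\<lambda>i. d0 * p i + 1 * u i)"
      by (simp add: u_image fun_eq_iff)
    moreover have "vec4 (\<lambda>i. d0 * p i + 1 * u i) (d0 * 0 + 1 * 1) \<noteq> zvec"
      by (auto simp: zvec_def fun_eq_iff intro!: exI[of _ 3])
    ultimately show ?thesis by auto
  qed
qed

end

lemma qf_plane_of_meeting_lines:
  assumes "line_on c L1" "line_on c L2" "X \<in> L1" "X \<in> L2" "P1 \<in> L1" "P2 \<in> L2"
  shows "qf 4 c (\<lambda>i. a * X i + b * P1 i + d * P2 i) = b * d * polar 4 c P1 P2"
  using assms line_on_polar[OF assms(1,3,5)] line_on_polar[OF assms(2,4,6)]
  by (auto simp: qf_lincomb3 line_on_def)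

lemma plane_point_in_lines:
  assumes L1: "line_on c L1" and L2: "line_on c L2" and "X \<in> L1" "X \<in> L2" "P1 \<in> L1" "P2 \<in> L2"
    and "polar 4 c P1 P2 \<noteq> 0" and "line_on c L0" "(\<lambda>i. a * X i + b * P1 i + d * P2 i) \<in> L0"
  shows "(\<lambda>i. a * X i + b * P1 i + d * P2 i) \<in> L1 \<union> L2"
proof -
  have "qf 4 c (\<lambda>i. a * X i + b * P1 i + d * P2 i) = 0"
    using assms(8,9) by (simp add: line_on_def)
  then have "b * d * polar 4 c P1 P2 = 0"
    by (simp only: qf_plane_of_meeting_lines[OF assms(1-6)])
  then have "b = 0 \<or> d = 0" using assms(7) by simp
  moreover have "b = 0 \<Longrightarrow> (\<lambda>i. a * X i + b * P1 i + d * P2 i) \<in> L2"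
    using lines4_lincomb[of L2 X P2 a d] L2 assms(4,6) by (simp add: line_on_def)
  moreover have "d = 0 \<Longrightarrow> (\<lambda>i. a * X i + b * P1 i + d * P2 i) \<in> L1"
    using lines4_lincomb[of L1 X P1 a b] L1 assms(3,5) by (simp add: line_on_def)
  ultimately show ?thesis by blast
qed

lemma skew_line_meets_plane:
  fixes s a b :: "('a::field) vect"
  assumes L0: "L0 \<in> lines4" "vec4 p0 0 \<in> L0" "vec4 u0 1 \<in> L0"
    and p0: "p0 \<in> vecs 3" "p0 \<noteq> zvec" and u0: "u0 \<in> vecs 3"
    and vecs: "s \<in> vecs 3" "a \<in> vecs 3" "b \<in> vecs 3" and ind: "indep2 a b"
  obtains \<alpha> \<beta> \<gamma> where "(\<lambda>i. \<alpha> * vec4 s 1 i + \<beta> * vec4 a 0 i + \<gamma> * vec4 b 0 i) \<in> L0"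
    "(\<lambda>i. \<alpha> * vec4 s 1 i + \<beta> * vec4 a 0 i + \<gamma> * vec4 b 0 i) \<noteq> zvec"
proof (cases "det3 p0 a b = 0")
  case True
  then obtain \<beta> \<gamma> where "p0 = (\<lambda>i. \<beta> * a i + \<gamma> * b i)"
    using det3_eq_0_span[OF _ vecs(2,3) p0(1) ind] det3_cycle[of p0 a b] by auto
  then have eq: "vec4 p0 0 = (\<lambda>i. 0 * vec4 s 1 i + \<beta> * vec4 a 0 i + \<gamma> * vec4 b 0 i)"
    unfolding vec4_lincomb3 by simp
  have "vec4 p0 0 \<noteq> zvec" using p0 by (simp add: vec4_eq_zvec_iff)
  then show ?thesis
    by (rule that[of 0 \<beta> \<gamma>, OF _ _, folded eq, OF L0(2)])
next
  case False
  define w where "w = (\<lambda>i. 1 * s i + (- 1) * u0 i)"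
  define c0 c1 c2 where "c0 = det3 w a b / det3 p0 a b" and "c1 = det3 p0 w b / det3 p0 a b"
    and "c2 = det3 p0 a w / det3 p0 a b"
  have "w \<in> vecs 3" unfolding w_def by (rule vecs_lincomb[OF vecs(1) u0])
  then have "w = (\<lambda>i. c0 * p0 i + c1 * a i + c2 * b i)"
    unfolding c0_def c1_def c2_def using False by (intro cramer3[OF _ _ p0(1) vecs(2,3)])
  then have "(\<lambda>i. c0 * p0 i + 1 * u0 i) = (\<lambda>i. 1 * s i + (- c1) * a i + (- c2) * b i)"
  proof (intro ext)
    fix i
    assume "w = (\<lambda>i. c0 * p0 i + c1 * a i + c2 * b i)"
    from fun_cong[OF this, of i] have "s i - u0 i = c0 * p0 i + c1 * a i + c2 * b i"
      by (simp add: w_def)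
    then show "c0 * p0 i + 1 * u0 i = 1 * s i + (- c1) * a i + (- c2) * b i" by algebra
  qed
  then have eq: "vec4 (\<lambda>i. c0 * p0 i + 1 * u0 i) (c0 * 0 + 1 * 1)
      = (\<lambda>i. 1 * vec4 s 1 i + (- c1) * vec4 a 0 i + (- c2) * vec4 b 0 i)"
    unfolding vec4_lincomb3 by simp
  have "vec4 (\<lambda>i. c0 * p0 i + 1 * u0 i) (c0 * 0 + 1 * 1) \<in> L0"
    using lines4_lincomb[OF L0, of c0 1] by (simp only: vec4_lincomb)
  moreover have "vec4 (\<lambda>i. c0 * p0 i + 1 * u0 i) (c0 * 0 + 1 * 1) \<noteq> zvec"
    by (auto simp: zvec_def fun_eq_iff intro!: exI[of _ 3])
  ultimately show ?thesis by (rule that[of 1 "- c1" "- c2", folded eq])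
qed

lemma distinct_lines_indep2_pi_points:
  assumes L: "L1 \<in> lines4" "L2 \<in> lines4" "L1 \<noteq> L2"
    and p: "p1 \<noteq> zvec" "p2 \<in> vecs 3" "p2 \<noteq> zvec" "vec4 p1 0 \<in> L1" "vec4 p2 0 \<in> L2"
    and X: "vec4 x 1 \<in> L1" "vec4 x 1 \<in> L2"
  shows "indep2 p1 p2"
proof (rule indep2I[OF p(1)])
  fix t
  show "p2 \<noteq> (\<lambda>i. t * p1 i)"
  proof
    assume "p2 = (\<lambda>i. t * p1 i)"
    then have "vec4 p2 0 = (\<lambda>i. t * vec4 p1 0 i + 0 * vec4 x 1 i)" unfolding vec4_lincomb by simp
    then have "vec4 p2 0 \<in> L1" using lines4_lincomb[OF L(1) p(4) X(1), of t 0] by simp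
    then have "L1 = L2" by (rule lines4_eqI[OF L(1,2) _ X(1) p(5) X(2) indep2_vec4[OF p(2,3)]]) simp
    then show False using L(3) by contradiction
  qed
qed

lemma distinct_lines_indep2_affine_difference:
  assumes L: "L1 \<in> lines4" "L2 \<in> lines4" "L1 \<noteq> L2"
    and x: "x \<in> vecs 3" "x \<noteq> zvec" "vec4 x 0 \<in> L1" "vec4 x 0 \<in> L2"
    and u: "vec4 u1 1 \<in> L1" "vec4 u2 1 \<in> L2"
  shows "indep2 x (\<lambda>i. 1 * u1 i + (- 1) * u2 i)"
proof (rule indep2I[OF x(2)])
  fix t
  show "(\<lambda>i. 1 * u1 i + (- 1) * u2 i) \<noteq> (\<lambda>i. t * x i)"
  proof
    assume v_eq: "(\<lambda>i. 1 * u1 i + (- 1) * u2 i) = (\<lambda>i. t * x i)"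
    have "u2 = (\<lambda>i. 1 * u1 i + (- t) * x i)"
    proof
      fix i
      from fun_cong[OF v_eq, of i] show "u2 i = 1 * u1 i + (- t) * x i" by (simp, algebra)
    qed
    then have "vec4 u2 1 = (\<lambda>i. 1 * vec4 u1 1 i + (- t) * vec4 x 0 i)" unfolding vec4_lincomb by simp
    then have "vec4 u2 1 \<in> L1" using lines4_lincomb[OF L(1) u(1) x(3), of 1 "- t"] by simp
    then have "L1 = L2" by (rule lines4_eqI[OF L(1,2) x(3) _ x(4) u(2) indep2_vec4[OF x(1,2)]]) simp
    then show False using L(3) by contradiction
  qed
qed

lemma meeting_lines_no_skew_line_off_pi:
  fixes c :: "('a::field) matr"
  assumes nd: "nondeg 3 c" and L0: "line_on c L0" and L1: "line_on c L1" and L2: "line_on c L2"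
    and "L1 \<noteq> L2" and x: "x \<in> vecs 3" and X1: "vec4 x 1 \<in> L1" and X2: "vec4 x 1 \<in> L2"
    and skew: "L0 \<inter> L1 = {zvec}" "L0 \<inter> L2 = {zvec}"
  shows False
proof -
  have L4: "L0 \<in> lines4" "L1 \<in> lines4" "L2 \<in> lines4" using L0 L1 L2 by (simp_all add: line_on_def)
  obtain p0 u0 where p0: "p0 \<in> vecs 3" "p0 \<noteq> zvec" "u0 \<in> vecs 3" "vec4 p0 0 \<in> L0" "vec4 u0 1 \<in> L0"
    using line_on_points[OF nd L0] by blast
  obtain p1 where p1: "p1 \<in> vecs 3" "p1 \<noteq> zvec" "vec4 p1 0 \<in> L1" using line_on_points[OF nd L1] by blast
  obtain p2 where p2: "p2 \<in> vecs 3" "p2 \<noteq> zvec" "vec4 p2 0 \<in> L2" using line_on_points[OF nd L2] by blast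
  have indep: "indep2 p1 p2"
    by (rule distinct_lines_indep2_pi_points[OF L4(2,3) \<open>L1 \<noteq> L2\<close> p1(2) p2(1,2) p1(3) p2(3) X1 X2])
  have "polar 4 c (vec4 p1 0) (vec4 p2 0) \<noteq> 0"
  proof
    assume "polar 4 c (vec4 p1 0) (vec4 p2 0) = 0"
    then have "qf 3 c (\<lambda>i. a * p1 i + b * p2 i) = 0" for a b
      using qf_plane_of_meeting_lines[OF L1 L2 X1 X2 p1(3) p2(3), of 0 a b]
      unfolding vec4_lincomb3 by (simp add: qf_vec4)
    then show False using nondeg_conic_contains_no_line[OF nd p1(1) p2(1) indep] by blast
  qed
  moreover obtain \<alpha> \<beta> \<gamma> where "(\<lambda>i. \<alpha> * vec4 x 1 i + \<beta> * vec4 p1 0 i + \<gamma> * vec4 p2 0 i) \<in> L0"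
    "(\<lambda>i. \<alpha> * vec4 x 1 i + \<beta> * vec4 p1 0 i + \<gamma> * vec4 p2 0 i) \<noteq> zvec"
    using skew_line_meets_plane[OF L4(1) p0(4,5) p0(1-3) x p1(1) p2(1) indep] by blast
  ultimately show False
    using plane_point_in_lines[OF L1 L2 X1 X2 p1(3) p2(3) _ L0] skew by blast
qed

lemma meeting_lines_no_skew_line_in_pi:
  fixes c :: "('a::field) matr"
  assumes nd: "nondeg 3 c" and L0: "line_on c L0" and L1: "line_on c L1" and L2: "line_on c L2"
    and "L1 \<noteq> L2" and x: "x \<in> vecs 3" "x \<noteq> zvec" and X1: "vec4 x 0 \<in> L1" and X2: "vec4 x 0 \<in> L2"
    and skew: "L0 \<inter> L1 = {zvec}" "L0 \<inter> L2 = {zvec}"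
  shows False
proof -
  have L4: "L0 \<in> lines4" "L1 \<in> lines4" "L2 \<in> lines4" using L0 L1 L2 by (simp_all add: line_on_def)
  obtain p0 u0 where p0: "p0 \<in> vecs 3" "p0 \<noteq> zvec" "u0 \<in> vecs 3" "vec4 p0 0 \<in> L0" "vec4 u0 1 \<in> L0"
    using line_on_points[OF nd L0] by blast
  obtain u1 where u1: "u1 \<in> vecs 3" "vec4 u1 1 \<in> L1" using line_on_points[OF nd L1] by blast
  obtain u2 where u2: "u2 \<in> vecs 3" "vec4 u2 1 \<in> L2" using line_on_points[OF nd L2] by blast
  define v where "v = (\<lambda>i. 1 * u1 i + (- 1) * u2 i)"
  have v: "v \<in> vecs 3" unfolding v_def by (rule vecs_lincomb[OF u1(1) u2(1)])
  have indep: "indep2 x v"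
    unfolding v_def by (rule distinct_lines_indep2_affine_difference[OF L4(2,3) \<open>L1 \<noteq> L2\<close> x X1 X2 u1(2) u2(2)])
  have v4: "vec4 v 0 = (\<lambda>i. 1 * vec4 u1 1 i + (- 1) * vec4 u2 1 i)"
    unfolding vec4_lincomb v_def by simp
  have polar: "polar 4 c (vec4 u1 1) (vec4 u2 1) \<noteq> 0"
  proof
    assume "polar 4 c (vec4 u1 1) (vec4 u2 1) = 0"
    then have "qf 4 c (\<lambda>i. a * vec4 x 0 i + b * vec4 u1 1 i + (- b) * vec4 u2 1 i) = 0" for a b
      using qf_plane_of_meeting_lines[OF L1 L2 X1 X2 u1(2) u2(2), of a b "- b"] by simp
    moreover have "(\<lambda>i. a * vec4 x 0 i + b * vec4 u1 1 i + (- b) * vec4 u2 1 i) = vec4 (\<lambda>i. a * x i + b * v i) 0"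
      for a b unfolding vec4_lincomb3 v_def by (simp add: algebra_simps)
    ultimately have "qf 3 c (\<lambda>i. a * x i + b * v i) = 0" for a b by (simp add: qf_vec4)
    then show False using nondeg_conic_contains_no_line[OF nd x(1) v indep] by blast
  qed
  obtain \<alpha> \<beta> \<gamma> where Y: "(\<lambda>i. \<alpha> * vec4 u1 1 i + \<beta> * vec4 x 0 i + \<gamma> * vec4 v 0 i) \<in> L0"
    "(\<lambda>i. \<alpha> * vec4 u1 1 i + \<beta> * vec4 x 0 i + \<gamma> * vec4 v 0 i) \<noteq> zvec"
    using skew_line_meets_plane[OF L4(1) p0(4,5) p0(1-3) u1(1) x(1) v indep] by blast
  have Y_eq: "(\<lambda>i. \<alpha> * vec4 u1 1 i + \<beta> * vec4 x 0 i + \<gamma> * vec4 v 0 i)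
      = (\<lambda>i. \<beta> * vec4 x 0 i + (\<alpha> + \<gamma>) * vec4 u1 1 i + (- \<gamma>) * vec4 u2 1 i)"
    unfolding v4 by (simp add: fun_eq_iff algebra_simps)
  have "(\<lambda>i. \<beta> * vec4 x 0 i + (\<alpha> + \<gamma>) * vec4 u1 1 i + (- \<gamma>) * vec4 u2 1 i) \<in> L1 \<union> L2"
    using Y(1) unfolding Y_eq by (rule plane_point_in_lines[OF L1 L2 X1 X2 u1(2) u2(2) polar L0])
  then show False using Y skew unfolding Y_eq by blast
qed

lemma meeting_lines_no_skew_line:
  fixes c :: "('a::field) matr"
  assumes nd: "nondeg 3 c" and L0: "line_on c L0" and L1: "line_on c L1" and L2: "line_on c L2"
    and "L1 \<noteq> L2" and X: "X \<noteq> zvec" "X \<in> L1" "X \<in> L2"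
    and skew: "L0 \<inter> L1 = {zvec}" "L0 \<inter> L2 = {zvec}"
  shows False
proof -
  have L4: "L1 \<in> lines4" "L2 \<in> lines4" using L1 L2 by (simp_all add: line_on_def)
  obtain x where x: "x \<in> vecs 3" and X_eq: "X = vec4 x (X 3)"
    using lines4_vecs[OF L4(1) X(2)] by (rule vecs4_obtain_vec4)
  show False
  proof (cases "X 3 = 0")
    case True
    then have "x \<noteq> zvec" using X(1) X_eq by (auto simp: vec4_eq_zvec_iff x)
    then show False
      using meeting_lines_no_skew_line_in_pi[OF nd L0 L1 L2 \<open>L1 \<noteq> L2\<close> x] X X_eq True skew by simp
  next
    case False
    have "vec4 (\<lambda>i. (1 / X 3) * x i + 0 * x i) ((1 / X 3) * X 3 + 0 * X 3) = (\<lambda>i. (1 / X 3) * X i + 0 * X i)"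
      by (subst (2 3) X_eq) (simp only: vec4_lincomb)
    then have "vec4 (\<lambda>i. (1 / X 3) * x i) 1 \<in> L1" "vec4 (\<lambda>i. (1 / X 3) * x i) 1 \<in> L2"
      using lines4_lincomb[OF L4(1) X(2) X(2), of "1 / X 3" 0] lines4_lincomb[OF L4(2) X(3) X(3), of "1 / X 3" 0]
        False by simp_all
    then show False
      using meeting_lines_no_skew_line_off_pi[OF nd L0 L1 L2 \<open>L1 \<noteq> L2\<close> vecs_scale[OF x]] skew by blast
  qed
qed

lemma regulus_line_on: "regulus c R \<Longrightarrow> L \<in> R \<Longrightarrow> line_on c L"
  by (auto simp: regulus_def)

lemma regulus_lines_disjoint:
  fixes c :: "('a::field) matr"
  assumes nd: "nondeg 3 c" and R: "regulus c R" and "L1 \<in> R" "L2 \<in> R" "L1 \<noteq> L2"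
    and X: "X \<in> L1" "X \<in> L2"
  shows "X = zvec"
proof (rule ccontr)
  assume "X \<noteq> zvec"
  obtain L0 where L0: "line_on c L0" and R_eq: "R = {L. line_on c L \<and> (L = L0 \<or> L \<inter> L0 = {zvec})}"
    using R by (auto simp: regulus_def)
  have L1: "line_on c L1" "L1 = L0 \<or> L1 \<inter> L0 = {zvec}" and L2: "line_on c L2" "L2 = L0 \<or> L2 \<inter> L0 = {zvec}"
    using assms(3,4) R_eq by auto
  show False
  proof (cases "L1 = L0 \<or> L2 = L0")
    case True
    then show False using L1(2) L2(2) \<open>L1 \<noteq> L2\<close> \<open>X \<noteq> zvec\<close> X by auto
  next
    case False
    then have "L0 \<inter> L1 = {zvec}" "L0 \<inter> L2 = {zvec}" using L1(2) L2(2) by auto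
    then show False
      using meeting_lines_no_skew_line[OF nd L0 L1(1) L2(1) \<open>L1 \<noteq> L2\<close> \<open>X \<noteq> zvec\<close> X] by blast
  qed
qed

theorem proposition3p9:
  fixes A :: "('a::{finite,field}) matr"
    and \<phi> :: "'a \<Rightarrow> 'b::{finite,field}"
    and c :: "'a matr"
    and R :: "'a vect set set"
  assumes "singer_cycle A"
    and "cubic_ext \<phi>"
    and "in_H \<phi> A c"
    and "qf 4 c pointT \<noteq> 0"
    and "regulus c R"
    and "L1 \<in> R" and "L2 \<in> R" and "L1 \<noteq> L2"
  shows "\<not> same_C_orbit A L1 L2"
proof
  assume "same_C_orbit A L1 L2"
  then obtain k where L2: "L2 = mat_mul_vec 4 (blk (mat_pow 3 A k)) ` L1"
    by (auto simp: same_C_orbit_def)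
  interpret singer_ext A \<phi>
    using assms(1,2) cubic_ext_field_hom[OF assms(2)]
    by (simp add: singer_ext_def singer_ext_axioms_def singer_def cubic_ext_def)
  have conic: "in_bundle \<phi> A c" and nd: "nondeg 3 c"
    using assms(3) by (simp_all add: in_H_def in_bundle_def)
  have T: "c 3 3 \<noteq> 0" using assms(4) by (simp add: qf_pointT)
  obtain X where "X \<noteq> zvec" "X \<in> L1" "X \<in> L2"
    using line_meets_image[OF conic nd T regulus_line_on[OF assms(5,6)], of k]
      regulus_line_on[OF assms(5,7)] L2 by auto
  then show False using regulus_lines_disjoint[OF nd assms(5-8)] by blast
qed

end
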